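(* There exists a constant $c>0$, depending only on $L,\rho,\lambda_\sigma,\kappa,\alpha,\beta,\eta$, such that if Assumption A1 holds, then for every function $F \colon \mathbb{R}^{n_L \times n} \to \mathbb{R}$ that is $1$-Lipschitz with respect to the Hilbert--Schmidt norm, and every $t > 0$, \begin{displaymath} \mathbb{P}(|F(Z_L) - \mathrm{Med}\, F(Z_L)| \ge t) \le 2\exp(-ct^2), \end{displaymath} where $\mathrm{Med}\, F(Z_L)$ denotes any median of $F(Z_L)$. Moreover, if $c_{opt} = c_{opt}(L,\rho,\lambda_\sigma,\kappa,\alpha,\beta,\eta)$ denotes the optimal (largest) constant $c$ for which the inequality $\mathbb{P}(|F(Z_L) - \mathrm{Med}\, F(Z_L)| \ge t) \le 2\exp(-ct^2)$ holds for all models satisfying Assumption A1 with these parameters, all such $F$ and all $t>0$, then, if simultaneously $\alpha\to 0$ and $\eta \to \infty$ while the other parameters are fixed, $c_{opt} \to \infty$.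
   Context: Setting: $L, n, n_0,\ldots,n_L$ are positive integers. For $\ell=0,\ldots,L-1$, $W_\ell$ is an $n_{\ell+1}\times n_\ell$ random matrix, $B_\ell$ a random vector in $\mathbb{R}^{n_{\ell+1}}$, and $\sigma_\ell\colon\mathbb{R}\to\mathbb{R}$ an activation function applied entrywise to matrices. $X$ is an $n_0\times n$ random matrix. Define $Z_0 = \frac{1}{\sqrt{n_0}}X$ and recursively $Z_{\ell+1} = \frac{1}{\sqrt{n_{\ell+1}}}\sigma_\ell(W_\ell Z_\ell + B_\ell \mathbf{1}_n^T)$, where $\mathbf{1}_n$ is the all-ones vector in $\mathbb{R}^n$. Let $\mathbf{X} = (X,(W_\ell,B_\ell)_{\ell=0,\ldots,L-1})$, viewed as a random vector in $\mathbb{R}^N$, $N = nn_0 + \sum_{\ell=0}^{L-1}(n_\ell n_{\ell+1}+n_{\ell+1})$. A random vector $\mathbf{X}$ in $\mathbb{R}^N$ satisfies the subgaussian concentration property with constant $\rho$ if for every $F\colon\mathbb{R}^N\to\mathbb{R}$ that is 1-Lipschitz w.r.t. the Euclidean norm and every $t>0$, $\mathbb{P}(|F(\mathbf{X}) - \mathrm{Med}\,F(\mathbf{X})|\ge t)\le 2\exp(-t^2/\rho^2)$. Assumption A1: (1) $\mathbf{X}$ satisfies the subgaussian concentration property with constant $\rho$; (2) $X$ and $W_\ell$, $\ell=0,\ldots,L-1$, are centered; (3) each $\sigma_\ell$ is $\lambda_\sigma$-Lipschitz with $\sup_x|\sigma_\ell(x)|\le\kappa$; (4) $n/n_\ell\le\alpha$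 for $\ell=1,\ldots,L$; (5) $n_{\ell-1}/n_\ell\le\beta$ for $\ell=1,\ldots,L$; (6) $n_0\ge\eta$. *)

theory Defs
  imports "HOL-Probability.Probability"
begin

text \<open>
  The random vector (X, (W_l, B_l)_l) is modelled through its law: a probability measure
  on the parameter space below (with the Borel sigma-algebra of the product topology).
  X i j : entry (i,j) of the n_0 x n input matrix;
  W l i k : entry (i,k) of the n_(l+1) x n_l weight matrix W_l;
  B l i : entry i of the bias vector B_l in R^(n_(l+1)).
  Entries outside these index ranges are irrelevant (all notions below ignore them).
  dims l = n_l.
\<close>

type_synonym params = "(nat \<Rightarrow> nat \<Rightarrow> real) \<times> (nat \<Rightarrow> nat \<Rightarrow> nat \<Rightarrow> real) \<times> (nat \<Rightarrow> nat \<Rightarrow> real)"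

definition pX :: "params \<Rightarrow> nat \<Rightarrow> nat \<Rightarrow> real" where "pX p = fst p"
definition pW :: "params \<Rightarrow> nat \<Rightarrow> nat \<Rightarrow> nat \<Rightarrow> real" where "pW p = fst (snd p)"
definition pB :: "params \<Rightarrow> nat \<Rightarrow> nat \<Rightarrow> real" where "pB p = snd (snd p)"

definition param_dist :: "nat \<Rightarrow> nat \<Rightarrow> (nat \<Rightarrow> nat) \<Rightarrow> params \<Rightarrow> params \<Rightarrow> real" where
  "param_dist L n dims p q = sqrt (
      (\<Sum>i<dims 0. \<Sum>j<n. (pX p i j - pX q i j)\<^sup>2)
    + (\<Sum>l<L. \<Sum>i<dims (Suc l). \<Sum>k<dims l. (pW p l i k - pW q l i k)\<^sup>2)
    + (\<Sum>l<L. \<Sum>i<dims (Suc l). (pB p l i - pB q l i)\<^sup>2))"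

definition hs_dist :: "nat \<Rightarrow> nat \<Rightarrow> (nat \<Rightarrow> nat \<Rightarrow> real) \<Rightarrow> (nat \<Rightarrow> nat \<Rightarrow> real) \<Rightarrow> real" where
  "hs_dist r s A B = sqrt (\<Sum>i<r. \<Sum>j<s. (A i j - B i j)\<^sup>2)"

fun Zlayer :: "(nat \<Rightarrow> nat) \<Rightarrow> (nat \<Rightarrow> real \<Rightarrow> real) \<Rightarrow> params \<Rightarrow> nat \<Rightarrow> nat \<Rightarrow> nat \<Rightarrow> real" where
  "Zlayer dims \<sigma> p 0 = (\<lambda>i j. pX p i j / sqrt (real (dims 0)))"
| "Zlayer dims \<sigma> p (Suc l) = (\<lambda>i j.
     \<sigma> l ((\<Sum>k<dims l. pW p l i k * Zlayer dims \<sigma> p l k j) + pB p l i) / sqrt (real (dims (Suc l))))"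

definition is_median :: "'a measure \<Rightarrow> ('a \<Rightarrow> real) \<Rightarrow> real \<Rightarrow> bool" where
  "is_median M Y m \<longleftrightarrow>
     measure M {x \<in> space M. Y x \<ge> m} \<ge> 1/2 \<and> measure M {x \<in> space M. Y x \<le> m} \<ge> 1/2"

definition subgauss_conc :: "'a measure \<Rightarrow> ('a \<Rightarrow> 'a \<Rightarrow> real) \<Rightarrow> real \<Rightarrow> bool" where
  "subgauss_conc M d \<rho> \<longleftrightarrow>
     (\<forall>F :: 'a \<Rightarrow> real. (\<forall>p q. \<bar>F p - F q\<bar> \<le> d p q) \<longrightarrow>
        (\<forall>t>0. \<forall>m. is_median M F m \<longrightarrow>
           measure M {p \<in> space M. \<bar>F p - m\<bar> \<ge> t} \<le> 2 * exp (- t\<^sup>2 / \<rho>\<^sup>2)))"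

definition A1 :: "nat \<Rightarrow> nat \<Rightarrow> (nat \<Rightarrow> nat) \<Rightarrow> (nat \<Rightarrow> real \<Rightarrow> real) \<Rightarrow> params measure
                  \<Rightarrow> real \<Rightarrow> real \<Rightarrow> real \<Rightarrow> real \<Rightarrow> real \<Rightarrow> real \<Rightarrow> bool" where
  "A1 L n dims \<sigma> M \<rho> lam \<kappa> \<alpha> \<beta> \<eta> \<longleftrightarrow>
     0 < L \<and> 0 < n \<and> (\<forall>l\<le>L. 0 < dims l) \<and>
     prob_space M \<and> sets M = sets borel \<and>
     subgauss_conc M (param_dist L n dims) \<rho> \<and>
     (\<forall>i<dims 0. \<forall>j<n. integrable M (\<lambda>p. pX p i j) \<and> (\<integral>p. pX p i j \<partial>M) = 0) \<and>
     (\<forall>l<L. \<forall>i<dims (Suc l). \<forall>k<dims l.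
         integrable M (\<lambda>p. pW p l i k) \<and> (\<integral>p. pW p l i k \<partial>M) = 0) \<and>
     (\<forall>l<L. (\<forall>x y. \<bar>\<sigma> l x - \<sigma> l y\<bar> \<le> lam * \<bar>x - y\<bar>) \<and> (\<forall>x. \<bar>\<sigma> l x\<bar> \<le> \<kappa>)) \<and>
     (\<forall>l\<in>{1..L}. real n / real (dims l) \<le> \<alpha>) \<and>
     (\<forall>l\<in>{1..L}. real (dims (l - 1)) / real (dims l) \<le> \<beta>) \<and>
     real (dims 0) \<ge> \<eta>"

definition valid_const :: "nat \<Rightarrow> real \<Rightarrow> real \<Rightarrow> real \<Rightarrow> real \<Rightarrow> real \<Rightarrow> real \<Rightarrow> real \<Rightarrow> bool" where
  "valid_const L \<rho> lam \<kappa> \<alpha> \<beta> \<eta> c \<longleftrightarrow>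
     (\<forall>n dims \<sigma> (M :: params measure). A1 L n dims \<sigma> M \<rho> lam \<kappa> \<alpha> \<beta> \<eta> \<longrightarrow>
        (\<forall>F :: (nat \<Rightarrow> nat \<Rightarrow> real) \<Rightarrow> real.
           (\<forall>A B. \<bar>F A - F B\<bar> \<le> hs_dist (dims L) n A B) \<longrightarrow>
           (\<forall>t>0. \<forall>m. is_median M (\<lambda>p. F (Zlayer dims \<sigma> p L)) m \<longrightarrow>
              measure M {p \<in> space M. \<bar>F (Zlayer dims \<sigma> p L) - m\<bar> \<ge> t}
                \<le> 2 * exp (- c * t\<^sup>2))))"

definition c_opt :: "nat \<Rightarrow> real \<Rightarrow> real \<Rightarrow> real \<Rightarrow> real \<Rightarrow> real \<Rightarrow> real \<Rightarrow> ereal" where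
  "c_opt L \<rho> lam \<kappa> \<alpha> \<beta> \<eta> = Sup {ereal c | c. 0 < c \<and> valid_const L \<rho> lam \<kappa> \<alpha> \<beta> \<eta> c}"

end

theory Submission
  imports Defs
begin

(* Concentration passes from the parameter vector to F(Z_L) through Lipschitz continuity.
   The map p \<mapsto> Z_L(p) is not globally Lipschitz, but it is on the event G on which X and every W_l
   have operator norm O(\<rho> (sqrt n_l + sqrt n_(l+1) + s)). These bounds hold with high probability by
   a net argument: for fixed test vectors the bilinear form u^T W v is a Lipschitz function of the
   parameters with mean zero, hence its median is O(\<rho>). On G the Lipschitz constants of the layers
   obey an affine recursion. McShane's extension of F(Z_L) from G is globally Lipschitz and therefore
   concentrated, which gives the concentration of F(Z_L) up to the probability exp(-4 c \<kappa>^2 n)/4 of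
   missing G; as |F(Z_L) - Med| \<le> 2 \<kappa> sqrt n anyway, this error is absorbed into 2 exp(-c t^2) once
   c (K \<rho>)^2 \<le> 1/100. For fixed c, K tends to 0 as \<alpha> \<rightarrow> 0 and \<eta> \<rightarrow> \<infinity>, so c_opt \<rightarrow> \<infinity>. *)

section \<open>Matrices with explicit index bounds\<close>

definition vec_norm :: "nat \<Rightarrow> (nat \<Rightarrow> real) \<Rightarrow> real" where
  "vec_norm a u = sqrt (\<Sum>i<a. (u i)\<^sup>2)"

definition bilinear_form :: "nat \<Rightarrow> nat \<Rightarrow> (nat \<Rightarrow> nat \<Rightarrow> real) \<Rightarrow> (nat \<Rightarrow> real) \<Rightarrow> (nat \<Rightarrow> real) \<Rightarrow> real" where
  "bilinear_form a b A u v = (\<Sum>i<a. \<Sum>k<b. u i * A i k * v k)"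

definition hs_norm :: "nat \<Rightarrow> nat \<Rightarrow> (nat \<Rightarrow> nat \<Rightarrow> real) \<Rightarrow> real" where
  "hs_norm a b A = sqrt (\<Sum>i<a. \<Sum>j<b. (A i j)\<^sup>2)"

definition mat_mult :: "nat \<Rightarrow> (nat \<Rightarrow> nat \<Rightarrow> real) \<Rightarrow> (nat \<Rightarrow> nat \<Rightarrow> real) \<Rightarrow> nat \<Rightarrow> nat \<Rightarrow> real" where
  "mat_mult b A Z = (\<lambda>i j. \<Sum>k<b. A i k * Z k j)"

text \<open>The operator-norm bound is phrased through the bilinear form, so that a bound on a net of
  test vectors transfers to it directly.\<close>

definition op_norm_le :: "nat \<Rightarrow> nat \<Rightarrow> (nat \<Rightarrow> nat \<Rightarrow> real) \<Rightarrow> real \<Rightarrow> bool" where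
  "op_norm_le a b A R \<longleftrightarrow> (\<forall>u v. bilinear_form a b A u v \<le> R * vec_norm a u * vec_norm b v)"

lemma vec_norm_eq_L2_set: "vec_norm a u = L2_set u {..<a}"
  unfolding vec_norm_def L2_set_def by simp

lemma vec_norm_nonneg: "vec_norm a u \<ge> 0"
  unfolding vec_norm_def by (simp add: sum_nonneg)

lemma hs_norm_nonneg: "hs_norm a b A \<ge> 0"
  unfolding hs_norm_def by (simp add: sum_nonneg)

lemma vec_norm_sq: "(vec_norm a u)\<^sup>2 = (\<Sum>i<a. (u i)\<^sup>2)"
  unfolding vec_norm_def by (simp add: sum_nonneg)
lemma hs_norm_sq: "(hs_norm a b A)\<^sup>2 = (\<Sum>i<a. \<Sum>j<b. (A i j)\<^sup>2)"
  unfolding hs_norm_def by (simp add: sum_nonneg)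

lemma vec_norm_minus_commute: "vec_norm a (\<lambda>i. u i - w i) = vec_norm a (\<lambda>i. w i - u i)"
  unfolding vec_norm_def by (simp add: power2_commute)

lemma vec_norm_triangle: "vec_norm a (\<lambda>i. u i + w i) \<le> vec_norm a u + vec_norm a w"
  unfolding vec_norm_eq_L2_set by (rule L2_set_triangle_ineq)

lemma abs_sum_mult_le_vec_norm: "\<bar>\<Sum>i<a. u i * w i\<bar> \<le> vec_norm a u * vec_norm a w"
proof -
  have "\<bar>\<Sum>i<a. u i * w i\<bar> \<le> (\<Sum>i<a. \<bar>u i\<bar> * \<bar>w i\<bar>)"
    by (rule order_trans[OF sum_abs]) (simp add: abs_mult)
  also have "\<dots> \<le> vec_norm a u * vec_norm a w" unfolding vec_norm_eq_L2_set by (rule L2_set_mult_ineq)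
  finally show ?thesis .
qed

lemma le_of_square_le_mult:
  fixes x R c :: real
  assumes "x\<^sup>2 \<le> R * x * c" "x \<ge> 0" "R \<ge> 0" "c \<ge> 0"
  shows "x \<le> R * c"
proof (cases "x = 0")
  case True
  then show ?thesis using assms by simp
next
  case False
  then have "x > 0" using assms by simp
  then have "x * x \<le> (R * c) * x" using assms by (simp add: power2_eq_square algebra_simps)
  then show ?thesis using \<open>x > 0\<close> by simp
qed

lemma bilinear_form_by_rows: "bilinear_form a b A u v = (\<Sum>i<a. u i * (\<Sum>k<b. A i k * v k))"
  unfolding bilinear_form_def by (simp add: sum_distrib_left mult.assoc)

lemma bilinear_form_by_columns: "bilinear_form a b A u v = (\<Sum>k<b. (\<Sum>i<a. u i * A i k) * v k)"
  unfolding bilinear_form_def by (subst sum.swap) (simp add: sum_distrib_right)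

lemma abs_bilinear_form_le_hs_norm:
  "\<bar>bilinear_form a b A u v\<bar> \<le> vec_norm a u * vec_norm b v * hs_norm a b A"
proof -
  define r where "r i = sqrt (\<Sum>k<b. (A i k)\<^sup>2)" for i
  have r: "\<bar>\<Sum>k<b. A i k * v k\<bar> \<le> r i * vec_norm b v" for i
    using abs_sum_mult_le_vec_norm[where a=b and u="A i" and w=v] unfolding r_def vec_norm_def by simp
  have "\<bar>bilinear_form a b A u v\<bar> \<le> (\<Sum>i<a. \<bar>u i\<bar> * \<bar>\<Sum>k<b. A i k * v k\<bar>)"
    unfolding bilinear_form_by_rows by (rule order_trans[OF sum_abs]) (simp add: abs_mult)
  also have "\<dots> \<le> (\<Sum>i<a. \<bar>u i\<bar> * (r i * vec_norm b v))"
    by (intro sum_mono mult_left_mono r) simp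
  also have "\<dots> = (\<Sum>i<a. \<bar>u i\<bar> * \<bar>r i\<bar>) * vec_norm b v"
    by (simp add: sum_distrib_right r_def mult.assoc sum_nonneg)
  also have "\<dots> \<le> (vec_norm a u * vec_norm a r) * vec_norm b v"
    by (intro mult_right_mono) (simp_all add: vec_norm_eq_L2_set L2_set_mult_ineq vec_norm_nonneg)
  also have "vec_norm a r = hs_norm a b A"
    unfolding vec_norm_def hs_norm_def r_def by (simp add: sum_nonneg)
  finally show ?thesis by (simp add: mult_ac)
qed

lemma bilinear_form_diff_left:
  "bilinear_form a b A (\<lambda>i. u i - w i) v = bilinear_form a b A u v - bilinear_form a b A w v"
  unfolding bilinear_form_def by (simp add: algebra_simps sum_subtractf)

lemma bilinear_form_diff_right:
  "bilinear_form a b A u (\<lambda>k. v k - w k) = bilinear_form a b A u v - bilinear_form a b A u w"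
  unfolding bilinear_form_def by (simp add: algebra_simps sum_subtractf)

lemma bilinear_form_scale_left: "bilinear_form a b A (\<lambda>i. c * u i) v = c * bilinear_form a b A u v"
  unfolding bilinear_form_def by (simp add: sum_distrib_left mult_ac)

lemma bilinear_form_scale_right: "bilinear_form a b A u (\<lambda>k. c * v k) = c * bilinear_form a b A u v"
  unfolding bilinear_form_def by (simp add: sum_distrib_left mult_ac)

lemma vec_norm_scale: "vec_norm a (\<lambda>i. c * u i) = \<bar>c\<bar> * vec_norm a u"
  unfolding vec_norm_def by (simp add: power_mult_distrib sum_distrib_left[symmetric] real_sqrt_mult)

lemma bilinear_form_eq_0_left: "vec_norm a u = 0 \<Longrightarrow> bilinear_form a b A u v = 0"
  unfolding vec_norm_def bilinear_form_def by (simp add: sum_nonneg_eq_0_iff)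

lemma bilinear_form_eq_0_right: "vec_norm b v = 0 \<Longrightarrow> bilinear_form a b A u v = 0"
  unfolding vec_norm_def bilinear_form_def by (simp add: sum_nonneg_eq_0_iff)

lemma hs_norm_mat_mult_left_le:
  assumes "op_norm_le a b A R" "R \<ge> 0"
  shows "hs_norm a n (mat_mult b A Z) \<le> R * hs_norm b n Z"
proof -
  define y where "y j = (\<lambda>i. mat_mult b A Z i j)" for j
  define z where "z j = (\<lambda>k. Z k j)" for j
  have col: "vec_norm a (y j) \<le> R * vec_norm b (z j)" for j
  proof (rule le_of_square_le_mult[OF _ vec_norm_nonneg assms(2) vec_norm_nonneg])
    have "(vec_norm a (y j))\<^sup>2 = bilinear_form a b A (y j) (z j)"
      unfolding vec_norm_sq bilinear_form_by_rows y_def z_def by (simp add: mat_mult_def power2_eq_square)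
    also have "\<dots> \<le> R * vec_norm a (y j) * vec_norm b (z j)" using assms(1) unfolding op_norm_le_def by blast
    finally show "(vec_norm a (y j))\<^sup>2 \<le> R * vec_norm a (y j) * vec_norm b (z j)" .
  qed
  have "(\<Sum>j<n. (vec_norm a (y j))\<^sup>2) \<le> (\<Sum>j<n. (R * vec_norm b (z j))\<^sup>2)"
    by (intro sum_mono power_mono col vec_norm_nonneg)
  also have "\<dots> = R\<^sup>2 * (hs_norm b n Z)\<^sup>2"
    unfolding hs_norm_sq by (simp add: power_mult_distrib vec_norm_sq z_def sum_distrib_left) (subst sum.swap, simp)
  finally have "(hs_norm a n (mat_mult b A Z))\<^sup>2 \<le> (R * hs_norm b n Z)\<^sup>2"
    unfolding hs_norm_sq[of a n] vec_norm_sq y_def by (subst sum.swap) (simp add: power_mult_distrib)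
  then show ?thesis by (rule power2_le_imp_le) (simp add: hs_norm_nonneg assms)
qed

lemma hs_norm_mat_mult_right_le:
  assumes "op_norm_le b n X R" "R \<ge> 0"
  shows "hs_norm a n (mat_mult b W X) \<le> R * hs_norm a b W"
proof -
  define v where "v i = (\<lambda>j. mat_mult b W X i j)" for i
  define w where "w i = (\<lambda>k. W i k)" for i
  have row: "vec_norm n (v i) \<le> R * vec_norm b (w i)" for i
  proof (rule le_of_square_le_mult[OF _ vec_norm_nonneg assms(2) vec_norm_nonneg])
    have "(vec_norm n (v i))\<^sup>2 = bilinear_form b n X (w i) (v i)"
      unfolding vec_norm_sq bilinear_form_by_columns v_def w_def by (simp add: mat_mult_def power2_eq_square)
    also have "\<dots> \<le> R * vec_norm b (w i) * vec_norm n (v i)" using assms(1) unfolding op_norm_le_def by blast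
    finally show "(vec_norm n (v i))\<^sup>2 \<le> R * vec_norm n (v i) * vec_norm b (w i)" by (simp add: mult_ac)
  qed
  have "(\<Sum>i<a. (vec_norm n (v i))\<^sup>2) \<le> (\<Sum>i<a. (R * vec_norm b (w i))\<^sup>2)"
    by (intro sum_mono power_mono row vec_norm_nonneg)
  also have "\<dots> = R\<^sup>2 * (hs_norm a b W)\<^sup>2"
    unfolding hs_norm_sq by (simp add: power_mult_distrib vec_norm_sq w_def sum_distrib_left)
  finally have "(hs_norm a n (mat_mult b W X))\<^sup>2 \<le> (R * hs_norm a b W)\<^sup>2"
    unfolding hs_norm_sq[of a n] vec_norm_sq v_def by (simp add: power_mult_distrib)
  then show ?thesis by (rule power2_le_imp_le) (simp add: hs_norm_nonneg assms)
qed

lemma op_norm_le_mono: "op_norm_le a b A R \<Longrightarrow> R \<le> R' \<Longrightarrow> op_norm_le a b A R'"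
  unfolding op_norm_le_def by (meson mult_right_mono vec_norm_nonneg order_trans)

lemma bilinear_form_diff_matrix:
  "bilinear_form a b (\<lambda>i k. A i k - B i k) u v = bilinear_form a b A u v - bilinear_form a b B u v"
  unfolding bilinear_form_def by (simp add: algebra_simps sum_subtractf)

lemma hs_norm_diff: "hs_norm a b (\<lambda>i k. A i k - B i k) = hs_dist a b A B"
  unfolding hs_norm_def hs_dist_def by simp

lemma hs_norm_eq_L2_set: "hs_norm a b A = L2_set (\<lambda>(i,j). A i j) ({..<a} \<times> {..<b})"
  unfolding hs_norm_def L2_set_def by (simp add: sum.cartesian_product case_prod_beta)

lemma hs_norm_triangle: "hs_norm a b (\<lambda>i j. A i j + B i j) \<le> hs_norm a b A + hs_norm a b B"
proof -
  have "hs_norm a b (\<lambda>i j. A i j + B i j)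
        = L2_set (\<lambda>x. (case x of (i, j) \<Rightarrow> A i j) + (case x of (i, j) \<Rightarrow> B i j)) ({..<a} \<times> {..<b})"
    unfolding hs_norm_eq_L2_set by (intro L2_set_cong) auto
  also have "\<dots> \<le> hs_norm a b A + hs_norm a b B" unfolding hs_norm_eq_L2_set by (rule L2_set_triangle_ineq)
  finally show ?thesis .
qed

lemma op_norm_le_hs_norm: "op_norm_le a b A (hs_norm a b A)"
  unfolding op_norm_le_def using abs_bilinear_form_le_hs_norm by (metis abs_le_D1 mult.commute mult.left_commute)

lemma op_norm_le_divide:
  assumes "op_norm_le a b A R" "c > 0"
  shows "op_norm_le a b (\<lambda>i k. A i k / c) (R / c)"
proof -
  have "bilinear_form a b (\<lambda>i k. A i k / c) u v = bilinear_form a b A u v / c" for u v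
    unfolding bilinear_form_def by (simp add: sum_divide_distrib)
  then show ?thesis using assms unfolding op_norm_le_def by (simp add: divide_right_mono)
qed

lemma hs_dist_divide: "c > 0 \<Longrightarrow> hs_dist a b (\<lambda>i j. A i j / c) (\<lambda>i j. B i j / c) = hs_dist a b A B / c"
  unfolding hs_dist_def
  by (simp add: diff_divide_distrib[symmetric] power_divide sum_divide_distrib[symmetric] real_sqrt_divide)

section \<open>Geometry of the parameter space\<close>

text \<open>Indexing the coordinates of the parameter vector exhibits \<open>param_dist\<close> as an \<open>L2_set\<close>
  distance, hence as a pseudometric that is continuous in each argument.\<close>

definition param_index :: "nat \<Rightarrow> nat \<Rightarrow> (nat \<Rightarrow> nat) \<Rightarrow> ((nat \<times> nat) + ((nat \<times> nat \<times> nat) + (nat \<times> nat))) set" where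
  "param_index L n dims = Inl ` ({..<dims 0} \<times> {..<n}) \<union>
     Inr ` (Inl ` (SIGMA l:{..<L}. {..<dims (Suc l)} \<times> {..<dims l}) \<union> Inr ` (SIGMA l:{..<L}. {..<dims (Suc l)}))"

fun param_coord :: "params \<Rightarrow> ((nat \<times> nat) + ((nat \<times> nat \<times> nat) + (nat \<times> nat))) \<Rightarrow> real" where
  "param_coord p (Inl (i, j)) = pX p i j"
| "param_coord p (Inr (Inl (l, i, k))) = pW p l i k"
| "param_coord p (Inr (Inr (l, i))) = pB p l i"

lemma sum_param_index:
  "(\<Sum>c\<in>param_index L n dims. g c) =
     (\<Sum>i<dims 0. \<Sum>j<n. g (Inl (i, j)))
   + (\<Sum>l<L. \<Sum>i<dims (Suc l). \<Sum>k<dims l. g (Inr (Inl (l, i, k))))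
   + (\<Sum>l<L. \<Sum>i<dims (Suc l). g (Inr (Inr (l, i))))"
proof -
  let ?A = "{..<dims 0} \<times> {..<n}"
  let ?B = "SIGMA l:{..<L}. {..<dims (Suc l)} \<times> {..<dims l}"
  let ?C = "SIGMA l:{..<L}. {..<dims (Suc l)}"
  have "(\<Sum>c\<in>param_index L n dims. g c) = (\<Sum>c\<in>Inl ` ?A. g c) + (\<Sum>c\<in>Inr ` (Inl ` ?B \<union> Inr ` ?C). g c)"
    unfolding param_index_def by (intro sum.union_disjoint) auto
  also have "(\<Sum>c\<in>Inl ` ?A. g c) = (\<Sum>x\<in>?A. g (Inl x))"
    by (subst sum.reindex) (auto simp: inj_on_def)
  also have "\<dots> = (\<Sum>i<dims 0. \<Sum>j<n. g (Inl (i, j)))"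
    by (simp add: sum.cartesian_product)
  also have "(\<Sum>c\<in>Inr ` (Inl ` ?B \<union> Inr ` ?C). g c) = (\<Sum>c\<in>Inl ` ?B \<union> Inr ` ?C. g (Inr c))"
    by (subst sum.reindex) (auto simp: inj_on_def)
  also have "\<dots> = (\<Sum>c\<in>Inl ` ?B. g (Inr c)) + (\<Sum>c\<in>Inr ` ?C. g (Inr c))"
    by (intro sum.union_disjoint) auto
  also have "(\<Sum>c\<in>Inl ` ?B. g (Inr c)) = (\<Sum>x\<in>?B. g (Inr (Inl x)))"
    by (subst sum.reindex) (auto simp: inj_on_def)
  also have "\<dots> = (\<Sum>l<L. \<Sum>x\<in>{..<dims (Suc l)} \<times> {..<dims l}. g (Inr (Inl (l,x))))"
    by (simp add: sum.Sigma split_def)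
  also have "\<dots> = (\<Sum>l<L. \<Sum>i<dims (Suc l). \<Sum>k<dims l. g (Inr (Inl (l,i,k))))"
    by (simp add: sum.cartesian_product')
  also have "(\<Sum>c\<in>Inr ` ?C. g (Inr c)) = (\<Sum>x\<in>?C. g (Inr (Inr x)))"
    by (subst sum.reindex) (auto simp: inj_on_def)
  also have "\<dots> = (\<Sum>l<L. \<Sum>i<dims (Suc l). g (Inr (Inr (l,i))))"
    by (simp add: sum.Sigma split_def)
  finally show ?thesis by (simp add: add.assoc)
qed

lemma param_dist_eq_L2_set:
  "param_dist L n dims p q = L2_set (\<lambda>c. param_coord p c - param_coord q c) (param_index L n dims)"
  unfolding L2_set_def param_dist_def sum_param_index by simp

lemma param_dist_triangle: "param_dist L n dims p r \<le> param_dist L n dims p q + param_dist L n dims q r"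
  unfolding param_dist_eq_L2_set
  using L2_set_triangle_ineq[of "\<lambda>c. param_coord p c - param_coord q c" "\<lambda>c. param_coord q c - param_coord r c"]
  by simp

lemma param_dist_commute: "param_dist L n dims p q = param_dist L n dims q p"
  unfolding param_dist_def by (simp add: power2_commute)

lemma param_dist_nonneg: "param_dist L n dims p q \<ge> 0"
  unfolding param_dist_eq_L2_set by simp

lemma param_dist_self: "param_dist L n dims p p = 0"
  unfolding param_dist_def by simp

lemma hs_dist_nonneg: "hs_dist a b A B \<ge> 0"
  unfolding hs_dist_def by (simp add: sum_nonneg)

lemma hs_dist_pX_le_param_dist: "hs_dist (dims 0) n (pX p) (pX q) \<le> param_dist L n dims p q"
  unfolding hs_dist_def param_dist_def by (intro real_sqrt_le_mono) (simp add: sum_nonneg)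

lemma hs_dist_pW_le_param_dist:
  assumes "l < L"
  shows "hs_dist (dims (Suc l)) (dims l) (pW p l) (pW q l) \<le> param_dist L n dims p q"
proof -
  have "(\<Sum>i<dims (Suc l). \<Sum>k<dims l. (pW p l i k - pW q l i k)\<^sup>2)
        \<le> (\<Sum>l<L. \<Sum>i<dims (Suc l). \<Sum>k<dims l. (pW p l i k - pW q l i k)\<^sup>2)"
    using assms by (intro member_le_sum) (auto intro!: sum_nonneg)
  moreover have "0 \<le> (\<Sum>i<dims 0. \<Sum>j<n. (pX p i j - pX q i j)\<^sup>2)"
    "0 \<le> (\<Sum>l<L. \<Sum>i<dims (Suc l). \<Sum>k<dims l. (pW p l i k - pW q l i k)\<^sup>2)"
    "0 \<le> (\<Sum>l<L. \<Sum>i<dims (Suc l). (pB p l i - pB q l i)\<^sup>2)"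
    by (intro sum_nonneg; simp)+
  ultimately show ?thesis unfolding hs_dist_def param_dist_def
    by (intro real_sqrt_le_mono) linarith
qed

lemma bias_dist_le_param_dist:
  assumes "l < L"
  shows "sqrt (\<Sum>i<dims (Suc l). (pB p l i - pB q l i)\<^sup>2) \<le> param_dist L n dims p q"
proof -
  have "(\<Sum>i<dims (Suc l). (pB p l i - pB q l i)\<^sup>2)
        \<le> (\<Sum>l<L. \<Sum>i<dims (Suc l). (pB p l i - pB q l i)\<^sup>2)"
    using assms by (intro member_le_sum) (auto intro!: sum_nonneg)
  moreover have "0 \<le> (\<Sum>i<dims 0. \<Sum>j<n. (pX p i j - pX q i j)\<^sup>2)"
    "0 \<le> (\<Sum>l<L. \<Sum>i<dims (Suc l). \<Sum>k<dims l. (pW p l i k - pW q l i k)\<^sup>2)"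
    "0 \<le> (\<Sum>l<L. \<Sum>i<dims (Suc l). (pB p l i - pB q l i)\<^sup>2)"
    by (intro sum_nonneg; simp)+
  ultimately show ?thesis unfolding hs_dist_def param_dist_def
    by (intro real_sqrt_le_mono) linarith
qed

lemma continuous_on_param_coord: "continuous_on UNIV (\<lambda>q. param_coord q c)"
proof -
  have "continuous_on UNIV (\<lambda>q::params. fst q)" "continuous_on UNIV (\<lambda>q::params. fst (snd q))"
    "continuous_on UNIV (\<lambda>q::params. snd (snd q))"
    by (intro continuous_intros)+
  note coordinates =
    this[THEN continuous_on_product_then_coordinatewise, THEN continuous_on_product_then_coordinatewise]
  consider i j where "c = Inl (i, j)" | l i k where "c = Inr (Inl (l, i, k))" | l i where "c = Inr (Inr (l, i))"
    by (cases c rule: sum.exhaust[case_product sum.exhaust]) (auto, metis sum.exhaust surj_pair prod_cases3)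
  then show ?thesis
  proof cases
    case 1
    then show ?thesis by (simp add: pX_def coordinates(1))
  next
    case 2
    then show ?thesis by (simp add: pW_def continuous_on_product_then_coordinatewise[OF coordinates(2)])
  next
    case 3
    then show ?thesis by (simp add: pB_def coordinates(3))
  qed
qed

lemma continuous_on_param_dist: "continuous_on UNIV (\<lambda>q. param_dist L n dims p q)"
  unfolding param_dist_eq_L2_set L2_set_def
  by (intro continuous_intros continuous_on_param_coord)

lemma param_lipschitz_continuous:
  assumes lip: "\<And>p q. \<bar>f p - f q\<bar> \<le> K * param_dist L n dims p q"
  shows "continuous_on UNIV (f :: params \<Rightarrow> real)"
proof -
  have "isCont f p" for p
  proof -
    have "((\<lambda>q. param_dist L n dims p q) \<longlongrightarrow> param_dist L n dims p p) (at p)"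
      using continuous_on_param_dist[of L n dims p] continuous_on_eq_continuous_at[OF open_UNIV] isCont_def
      by blast
    then have "((\<lambda>q. K * param_dist L n dims p q) \<longlongrightarrow> 0) (at p)"
      using tendsto_mult_left[of _ _ _ K] by (force simp: param_dist_self)
    then have "((\<lambda>q. f q - f p) \<longlongrightarrow> 0) (at p)"
    proof (rule Lim_null_comparison[rotated], intro always_eventually allI)
      show "norm (f q - f p) \<le> K * param_dist L n dims p q" for q
        using lip[of q p] by (simp add: param_dist_commute[of L n dims q p])
    qed
    then show ?thesis unfolding isCont_def by (simp add: LIM_zero_iff)
  qed
  then show ?thesis by (simp add: continuous_at_imp_continuous_on)
qed

lemma param_lipschitz_measurable:
  assumes "\<And>p q. \<bar>f p - f q\<bar> \<le> K * param_dist L n dims p q" and "sets M = sets borel"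
  shows "f \<in> borel_measurable M"
  using borel_measurable_continuous_onI[OF param_lipschitz_continuous[OF assms(1)]]
  by (simp add: measurable_cong_sets[OF assms(2) refl])

section \<open>Medians and concentration\<close>

lemma (in real_distribution) exists_median_cdf: "\<exists>m. cdf M m \<ge> 1/2 \<and> measure M {..<m} \<le> 1/2"
proof -
  define S where "S = {x. cdf M x \<ge> 1/2}"
  have "eventually (\<lambda>x. cdf M x > 1/2) at_top"
    using cdf_lim_at_top_prob by (rule order_tendstoD) simp
  then obtain x1 where "cdf M x1 > 1/2" by (metis eventually_at_top_linorder order_refl)
  then have S_ne: "S \<noteq> {}" unfolding S_def by (auto intro!: exI[of _ x1])
  have "eventually (\<lambda>x. cdf M x < 1/2) at_bot"
    using cdf_lim_at_bot by (rule order_tendstoD) simp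
  then obtain x0 where x0: "\<And>x. x \<le> x0 \<Longrightarrow> cdf M x < 1/2" by (auto simp: eventually_at_bot_linorder)
  have S_bdd: "bdd_below S"
    unfolding bdd_below_def S_def by (rule exI[of _ x0]) (metis linorder_not_le mem_Collect_eq x0 less_le_not_le)
  define m where "m = Inf S"
  have "eventually (\<lambda>y. 1/2 \<le> cdf M y) (at_right m)"
  proof (unfold eventually_at_right_field, intro exI[of _ "m + 1"] conjI allI impI)
    fix y assume "m < y" "y < m + 1"
    then obtain x where "x \<in> S" "x < y" using S_ne unfolding m_def by (meson cInf_lessD)
    then show "1/2 \<le> cdf M y" unfolding S_def using cdf_nondecreasing[of x y] by auto
  qed simp
  then have "cdf M m \<ge> 1/2"
    using cdf_is_right_cont[of m]
    by (intro tendsto_lowerbound[of "cdf M"]) (auto simp: continuous_within trivial_limit_at_right_real)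
  moreover have "eventually (\<lambda>y. cdf M y \<le> 1/2) (at_left m)"
  proof (unfold eventually_at_left_field, intro exI[of _ "m - 1"] conjI allI impI)
    fix y assume "m - 1 < y" "y < m"
    then have "y \<notin> S" unfolding m_def using S_bdd cInf_lower by (metis linorder_not_le)
    then show "cdf M y \<le> 1/2" unfolding S_def by auto
  qed simp
  then have "measure M {..<m} \<le> 1/2"
    by (intro tendsto_upperbound[OF cdf_at_left]) (auto simp: trivial_limit_at_left_real)
  ultimately show ?thesis by blast
qed

lemma median_exists:
  assumes "prob_space M" and Y: "Y \<in> borel_measurable M"
  shows "\<exists>m. is_median M Y m"
proof -
  interpret prob_space M by fact
  interpret N: real_distribution "distr M borel Y" using Y by simp
  obtain m where m: "cdf (distr M borel Y) m \<ge> 1/2" "measure (distr M borel Y) {..<m} \<le> 1/2"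
    using N.exists_median_cdf by blast
  have "measure M {p\<in>space M. Y p \<le> m} \<ge> 1/2" "measure M {p\<in>space M. Y p < m} \<le> 1/2"
    using m Y unfolding cdf_def by (subst (asm) (1 2) measure_distr; simp add: vimage_def Int_def conj_commute)+
  moreover have "{p\<in>space M. Y p \<ge> m} = space M - {p\<in>space M. Y p < m}" by auto
  ultimately show ?thesis
    using Y unfolding is_median_def by (intro exI[of _ m]) (simp add: prob_compl)
qed

lemma subgauss_conc_lipschitz:
  assumes conc: "subgauss_conc M d \<rho>"
    and lip: "\<And>p q. \<bar>f p - f q\<bar> \<le> K * d p q" and K: "K > 0"
    and med: "is_median M f m" and t: "t > 0"
  shows "measure M {p\<in>space M. \<bar>f p - m\<bar> \<ge> t} \<le> 2 * exp (- t\<^sup>2 / (K * \<rho>)\<^sup>2)"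
proof -
  define g where "g p = f p / K" for p
  have "\<bar>g p - g q\<bar> \<le> d p q" for p q
    using lip[of p q] K unfolding g_def
    by (simp add: diff_divide_distrib[symmetric] abs_div pos_divide_le_eq mult.commute)
  moreover have "is_median M g (m / K)"
    using med K unfolding is_median_def g_def by (simp add: divide_le_cancel)
  ultimately have "measure M {p\<in>space M. \<bar>g p - m / K\<bar> \<ge> t / K} \<le> 2 * exp (- (t / K)\<^sup>2 / \<rho>\<^sup>2)"
    using conc t K unfolding subgauss_conc_def by auto
  moreover have "{p\<in>space M. \<bar>g p - m / K\<bar> \<ge> t / K} = {p\<in>space M. \<bar>f p - m\<bar> \<ge> t}"
    unfolding g_def using K by (auto simp: diff_divide_distrib[symmetric] abs_div divide_le_cancel)
  ultimately show ?thesis by (simp add: power_divide power_mult_distrib)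
qed

lemma ennreal_le_suminf_levels:
  assumes "s > 0" "z \<ge> (0::real)"
  shows "ennreal z \<le> (\<Sum>k. ennreal s * indicator {x. real k * s \<le> x} z)"
proof -
  define N where "N = nat \<lfloor>z / s\<rfloor>"
  have "z / s < real N + 1" unfolding N_def using assms by linarith
  then have "z \<le> (real N + 1) * s" using assms by (simp add: divide_less_eq)
  moreover have "real k * s \<le> z" if "k < N + 1" for k
  proof -
    have "real k \<le> real N" using that by simp
    also have "real N \<le> z / s" unfolding N_def using assms by simp
    finally show ?thesis using assms by (simp add: le_divide_eq)
  qed
  then have "(\<Sum>k<N + 1. ennreal s * indicator {x. real k * s \<le> x} z) = ennreal ((real N + 1) * s)"
    using assms by (simp add: ennreal_of_nat_eq_real_of_nat ennreal_mult' add.commute)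
  ultimately have "ennreal z \<le> (\<Sum>k<N + 1. ennreal s * indicator {x. real k * s \<le> x} z)"
    by (simp add: ennreal_leI)
  also have "\<dots> \<le> (\<Sum>k. ennreal s * indicator {x. real k * s \<le> x} z)"
    by (intro sum_le_suminf) (auto intro: summableI)
  finally show ?thesis .
qed

lemma nn_integral_le_of_geometric_tails:
  assumes Z: "Z \<in> borel_measurable M" "\<And>x. Z x \<ge> 0" and s: "s > 0"
    and tail: "\<And>k. emeasure M {x\<in>space M. real k * s \<le> Z x} \<le> ennreal (2 * (1/2)^k)"
  shows "(\<integral>\<^sup>+x. ennreal (Z x) \<partial>M) \<le> ennreal (4 * s)"
proof -
  have "(\<integral>\<^sup>+x. ennreal (Z x) \<partial>M) \<le> (\<integral>\<^sup>+x. (\<Sum>k. ennreal s * indicator {x\<in>space M. real k * s \<le> Z x} x) \<partial>M)"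
    using ennreal_le_suminf_levels[OF s Z(2)] by (intro nn_integral_mono) (simp add: indicator_def)
  also have "\<dots> = (\<Sum>k. \<integral>\<^sup>+x. ennreal s * indicator {x\<in>space M. real k * s \<le> Z x} x \<partial>M)"
    using Z by (intro nn_integral_suminf) measurable
  also have "\<dots> = (\<Sum>k. ennreal s * emeasure M {x\<in>space M. real k * s \<le> Z x})"
    using Z by (intro suminf_cong nn_integral_cmult_indicator) measurable
  also have "\<dots> \<le> (\<Sum>k. ennreal s * ennreal (2 * (1/2)^k))"
    by (intro suminf_le mult_left_mono tail) (auto intro: summableI)
  also have "\<dots> = (\<Sum>k. ennreal (s * (2 * (1/2)^k)))"
    using s by (simp add: ennreal_mult')
  also have "\<dots> = ennreal (\<Sum>k. s * (2 * (1/2)^k))"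
    using s by (intro suminf_ennreal2) (auto intro!: summable_mult summable_geometric)
  also have "(\<Sum>k. s * (2 * (1/2::real)^k)) = (2 * s) * (\<Sum>k. (1/2::real)^k)"
    by (subst suminf_mult[OF summable_geometric, symmetric]) (simp_all add: mult_ac)
  also have "\<dots> = 4 * s" by (simp add: suminf_geometric)
  finally show ?thesis .
qed

lemma exp_neg_square_le_half_power: "exp (- (real k)\<^sup>2) \<le> (1/2::real)^k"
proof -
  have "real k \<le> real k * real k" by (metis le_square of_nat_le_iff of_nat_mult)
  then have "exp (- (real k)\<^sup>2) \<le> exp (- real k)" by (simp add: power2_eq_square)
  also have "\<dots> = (exp (-1))^k" by (simp flip: exp_of_nat_mult)
  also have "\<dots> \<le> (1/2)^k"
    using exp_ge_add_one_self[of 1] by (intro power_mono) (auto simp: exp_minus field_simps)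
  finally show ?thesis .
qed

text \<open>Integrating the subgaussian tails around the median bounds \<open>E |f - m|\<close>, which dominates
  \<open>|m| = |E (f - m)|\<close>.\<close>

lemma abs_median_le_of_mean_zero:
  assumes "prob_space M" and conc: "subgauss_conc M d \<rho>" and \<rho>: "\<rho> > 0"
    and lip: "\<And>p q. \<bar>f p - f q\<bar> \<le> K * d p q" and K: "K > 0"
    and f: "f \<in> borel_measurable M" "integrable M f" and mean: "(\<integral>p. f p \<partial>M) = 0"
    and med: "is_median M f m"
  shows "\<bar>m\<bar> \<le> 4 * (K * \<rho>)"
proof -
  interpret prob_space M by fact
  define Z where "Z p = \<bar>f p - m\<bar>" for p
  have Z: "Z \<in> borel_measurable M" "integrable M Z" unfolding Z_def using f by auto
  have s: "K * \<rho> > 0" using K \<rho> by simp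
  have "measure M {p\<in>space M. real k * (K * \<rho>) \<le> Z p} \<le> 2 * (1/2)^k" for k
  proof (cases "k = 0")
    case True
    then show ?thesis using prob_le_1 by (simp add: order_trans[OF prob_le_1])
  next
    case False
    then have "real k * (K * \<rho>) > 0" using s by simp
    then have "measure M {p\<in>space M. real k * (K * \<rho>) \<le> Z p} \<le> 2 * exp (- (real k * (K * \<rho>))\<^sup>2 / (K * \<rho>)\<^sup>2)"
      unfolding Z_def by (rule subgauss_conc_lipschitz[OF conc lip K med])
    also have "\<dots> = 2 * exp (- (real k)\<^sup>2)" using K \<rho> by (simp add: power_mult_distrib)
    finally show ?thesis using exp_neg_square_le_half_power[of k] by linarith
  qed
  then have "(\<integral>\<^sup>+p. ennreal (Z p) \<partial>M) \<le> ennreal (4 * (K * \<rho>))"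
    by (intro nn_integral_le_of_geometric_tails[OF Z(1) _ s]) (auto simp: emeasure_eq_measure ennreal_leI Z_def)
  then have "(\<integral>p. Z p \<partial>M) \<le> 4 * (K * \<rho>)"
    using Z s by (subst (asm) nn_integral_eq_integral) (auto simp: Z_def[abs_def])
  moreover have "\<bar>m\<bar> = \<bar>\<integral>p. (f p - m) \<partial>M\<bar>" using f mean by (simp add: prob_space)
  moreover have "\<bar>\<integral>p. (f p - m) \<partial>M\<bar> \<le> (\<integral>p. Z p \<partial>M)" unfolding Z_def by (rule integral_abs_bound)
  ultimately show ?thesis by linarith
qed

section \<open>Nets and operator norms\<close>

definition op_norm :: "nat \<Rightarrow> nat \<Rightarrow> (nat \<Rightarrow> nat \<Rightarrow> real) \<Rightarrow> real" where
  "op_norm a b A = Sup {bilinear_form a b A u v | u v. vec_norm a u \<le> 1 \<and> vec_norm b v \<le> 1}"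

lemma bdd_above_bilinear_form_unit_balls:
  "bdd_above {bilinear_form a b A u v | u v. vec_norm a u \<le> 1 \<and> vec_norm b v \<le> 1}"
proof (rule bdd_aboveI)
  fix x assume "x \<in> {bilinear_form a b A u v | u v. vec_norm a u \<le> 1 \<and> vec_norm b v \<le> 1}"
  then obtain u v where x: "x = bilinear_form a b A u v" "vec_norm a u \<le> 1" "vec_norm b v \<le> 1" by auto
  have "x \<le> vec_norm a u * vec_norm b v * hs_norm a b A"
    using abs_bilinear_form_le_hs_norm[of a b A u v] x(1) by simp
  also have "\<dots> \<le> 1 * 1 * hs_norm a b A"
    using x by (intro mult_right_mono mult_mono hs_norm_nonneg vec_norm_nonneg) auto
  finally show "x \<le> hs_norm a b A" by simp
qed

lemma bilinear_form_le_op_norm: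
  assumes "vec_norm a u \<le> 1" "vec_norm b v \<le> 1"
  shows "bilinear_form a b A u v \<le> op_norm a b A"
  unfolding op_norm_def using assms by (intro cSup_upper bdd_above_bilinear_form_unit_balls) auto

lemma op_norm_nonneg: "op_norm a b A \<ge> 0"
  using bilinear_form_le_op_norm[of a "\<lambda>_. 0" b "\<lambda>_. 0" A] by (simp add: vec_norm_def bilinear_form_def)

lemma op_norm_least:
  assumes "\<And>u v. vec_norm a u \<le> 1 \<Longrightarrow> vec_norm b v \<le> 1 \<Longrightarrow> bilinear_form a b A u v \<le> z"
  shows "op_norm a b A \<le> z"
  unfolding op_norm_def using assms by (intro cSup_least) (auto intro!: exI[of _ "\<lambda>_. 0"] simp: vec_norm_def)

lemma op_norm_le_op_norm: "op_norm_le a b A (op_norm a b A)"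
  unfolding op_norm_le_def
proof (intro allI)
  fix u v
  show "bilinear_form a b A u v \<le> op_norm a b A * vec_norm a u * vec_norm b v"
  proof (cases "vec_norm a u = 0 \<or> vec_norm b v = 0")
    case True
    then show ?thesis using bilinear_form_eq_0_left bilinear_form_eq_0_right by auto
  next
    case False
    then have u: "vec_norm a u > 0" and v: "vec_norm b v > 0"
      using vec_norm_nonneg[of a u] vec_norm_nonneg[of b v] by auto
    have "vec_norm a (\<lambda>i. (1 / vec_norm a u) * u i) = 1" "vec_norm b (\<lambda>i. (1 / vec_norm b v) * v i) = 1"
      using u v by (simp_all only: vec_norm_scale) simp_all
    then have "bilinear_form a b A (\<lambda>i. (1 / vec_norm a u) * u i) (\<lambda>i. (1 / vec_norm b v) * v i) \<le> op_norm a b A"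
      by (intro bilinear_form_le_op_norm) simp_all
    then show ?thesis using u v
      by (simp only: bilinear_form_scale_left bilinear_form_scale_right) (simp add: field_simps)
  qed
qed

definition quarter_net :: "nat \<Rightarrow> (nat \<Rightarrow> real) set \<Rightarrow> bool" where
  "quarter_net a N \<longleftrightarrow> finite N \<and> (\<forall>w\<in>N. vec_norm a w \<le> 5/4) \<and>
     (\<forall>u. vec_norm a u \<le> 1 \<longrightarrow> (\<exists>w\<in>N. vec_norm a (\<lambda>i. u i - w i) \<le> 1/4))"

text \<open>Approximating unit vectors from the nets loses at most
  \<open>op_norm/4 + (5/4) op_norm/4 = 9/16 op_norm\<close>, which can be absorbed.\<close>

lemma op_norm_le_of_quarter_nets:
  assumes Na: "quarter_net a Na" and Nb: "quarter_net b Nb"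
    and T: "\<And>u v. u \<in> Na \<Longrightarrow> v \<in> Nb \<Longrightarrow> bilinear_form a b A u v \<le> T"
  shows "op_norm_le a b A (3 * T)" and "T \<ge> 0"
proof -
  let ?M = "op_norm a b A"
  have gen: "bilinear_form a b A u v \<le> ?M * vec_norm a u * vec_norm b v" for u v
    using op_norm_le_op_norm unfolding op_norm_le_def by blast
  have "bilinear_form a b A u v \<le> T + 9/16 * ?M" if u: "vec_norm a u \<le> 1" and v: "vec_norm b v \<le> 1" for u v
  proof -
    obtain u0 where u0: "u0 \<in> Na" "vec_norm a (\<lambda>i. u i - u0 i) \<le> 1/4" "vec_norm a u0 \<le> 5/4"
      using Na u unfolding quarter_net_def by blast
    obtain v0 where v0: "v0 \<in> Nb" "vec_norm b (\<lambda>i. v i - v0 i) \<le> 1/4"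
      using Nb v unfolding quarter_net_def by blast
    have "bilinear_form a b A u v = bilinear_form a b A u0 v0 + bilinear_form a b A (\<lambda>i. u i - u0 i) v
                               + bilinear_form a b A u0 (\<lambda>i. v i - v0 i)"
      by (simp add: bilinear_form_diff_left bilinear_form_diff_right)
    also have "\<dots> \<le> T + ?M * (1/4) * 1 + ?M * (5/4) * (1/4)"
    proof (intro add_mono T u0(1) v0(1))
      show "bilinear_form a b A (\<lambda>i. u i - u0 i) v \<le> ?M * (1/4) * 1"
        using gen[of "\<lambda>i. u i - u0 i" v] u0 v op_norm_nonneg[of a b A]
        by (meson mult_mono mult_left_mono order_trans vec_norm_nonneg zero_le_mult_iff)
      show "bilinear_form a b A u0 (\<lambda>i. v i - v0 i) \<le> ?M * (5/4) * (1/4)"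
        using gen[of u0 "\<lambda>i. v i - v0 i"] u0 v0 op_norm_nonneg[of a b A]
        by (meson mult_mono mult_left_mono order_trans vec_norm_nonneg zero_le_mult_iff)
    qed
    finally show ?thesis by simp
  qed
  then have "?M \<le> T + 9/16 * ?M" by (rule op_norm_least)
  then have M: "?M \<le> 16/7 * T" by simp
  then show T: "T \<ge> 0" using op_norm_nonneg[of a b A] by simp
  show "op_norm_le a b A (3 * T)"
    using M T by (intro op_norm_le_mono[OF op_norm_le_op_norm]) linarith
qed

definition int_l1_ball :: "nat \<Rightarrow> nat \<Rightarrow> (nat \<Rightarrow> int) set" where
  "int_l1_ball a m = {z. (\<forall>i\<ge>a. z i = 0) \<and> (\<Sum>i<a. \<bar>z i\<bar>) \<le> int m}"

lemma sum_half_power_abs: "(\<Sum>k\<in>{-int m..int m}. (1/2::real)^(nat \<bar>k\<bar>)) = 3 - 2 * (1/2)^m"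
proof (induction m)
  case (Suc m)
  have "{-int (Suc m)..int (Suc m)} = insert (-int (Suc m)) (insert (int (Suc m)) {-int m..int m})" by auto
  moreover have "nat (int m + 1) = Suc m" "nat (1 + int m) = Suc m" by auto
  ultimately show ?case using Suc by simp
qed simp

lemma inj_on_restrict_int_l1_ball: "inj_on (\<lambda>z. restrict z {..<a}) (int_l1_ball a m)"
proof (rule inj_onI, rule ext)
  fix z w i
  assume zw: "z \<in> int_l1_ball a m" "w \<in> int_l1_ball a m" and eq: "restrict z {..<a} = restrict w {..<a}"
  show "z i = w i"
  proof (cases "i < a")
    case True
    then show ?thesis using fun_cong[OF eq, of i] by simp
  next
    case False
    then show ?thesis using zw unfolding int_l1_ball_def by simp
  qed
qed

text \<open>Counting with the weights \<open>2^m (1/2)^(sum |z i|) \<ge> 1\<close> over the box \<open>{-m..m}^a\<close>.\<close>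

lemma card_int_l1_ball_le: "finite (int_l1_ball a m)" "real (card (int_l1_ball a m)) \<le> 3^a * 2^m"
proof -
  define Box where "Box = {..<a} \<rightarrow>\<^sub>E {-int m..int m}"
  define R where "R = (\<lambda>z. restrict z {..<a}) ` int_l1_ball a m"
  have "-int m \<le> z i \<and> z i \<le> int m" if "z \<in> int_l1_ball a m" "i < a" for z i
    using that member_le_sum[of i "{..<a}" "\<lambda>i. \<bar>z i\<bar>"] unfolding int_l1_ball_def by auto
  then have R_Box: "R \<subseteq> Box" unfolding R_def Box_def by (intro image_subsetI) (simp add: Pi_iff)
  have card_R: "card (int_l1_ball a m) = card R"
    unfolding R_def by (rule card_image[OF inj_on_restrict_int_l1_ball, symmetric])
  have fin_Box: "finite Box" unfolding Box_def by (intro finite_PiE) auto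
  then show fin: "finite (int_l1_ball a m)"
    using finite_subset[OF R_Box fin_Box] inj_on_restrict_int_l1_ball unfolding R_def
    by (simp add: finite_image_iff)
  let ?w = "\<lambda>g. (\<Prod>i<a. (1/2::real)^(nat \<bar>g i\<bar>))"
  have "1 \<le> 2^m * ?w g" if "g \<in> R" for g
  proof -
    obtain z where z: "z \<in> int_l1_ball a m" "g = restrict z {..<a}" using \<open>g \<in> R\<close> unfolding R_def by auto
    have "int (\<Sum>i<a. nat \<bar>g i\<bar>) = (\<Sum>i<a. \<bar>z i\<bar>)" using z by (simp add: int_sum)
    also have "\<dots> \<le> int m" using z(1) unfolding int_l1_ball_def by simp
    finally have "(\<Sum>i<a. nat \<bar>g i\<bar>) \<le> m" by (simp only: of_nat_le_iff)
    then have "(1/2::real)^m \<le> ?w g" unfolding power_sum[symmetric] by (rule power_decreasing) auto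
    then show ?thesis by (simp add: power_one_over field_simps)
  qed
  then have "real (card R) \<le> (\<Sum>g\<in>R. 2^m * ?w g)"
    using sum_mono[of R "\<lambda>_. 1::real"] by simp
  also have "\<dots> \<le> (\<Sum>g\<in>Box. 2^m * ?w g)"
    by (intro sum_mono2[OF fin_Box R_Box] mult_nonneg_nonneg prod_nonneg) auto
  also have "\<dots> = 2^m * (\<Prod>i<a. \<Sum>k\<in>{-int m..int m}. (1/2::real)^(nat \<bar>k\<bar>))"
    unfolding Box_def by (subst prod_sum_PiE) (auto simp: sum_distrib_left)
  also have "\<dots> \<le> 2^m * 3^a"
    using power_le_one[of "1/2::real" m] by (simp add: sum_half_power_abs) (intro power_mono; simp)
  finally show "real (card (int_l1_ball a m)) \<le> 3^a * 2^m" by (simp add: card_R mult.commute)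
qed

lemma sum_abs_le_sqrt_vec_norm: "(\<Sum>i<a. \<bar>u i\<bar>) \<le> sqrt (real a) * vec_norm a u"
  using abs_sum_mult_le_vec_norm[where a=a and u="\<lambda>_. 1" and w="\<lambda>i. \<bar>u i\<bar>"]
  by (simp add: sum_nonneg vec_norm_def)

lemma vec_norm_diff_floor_grid:
  assumes "s > 0"
  shows "vec_norm a (\<lambda>i. u i - of_int \<lfloor>s * u i\<rfloor> / s) \<le> sqrt (real a) / s"
proof -
  have "(u i - of_int \<lfloor>s * u i\<rfloor> / s)\<^sup>2 \<le> (1 / s)\<^sup>2" for i
  proof -
    have "u i - of_int \<lfloor>s * u i\<rfloor> / s = (s * u i - of_int \<lfloor>s * u i\<rfloor>) / s"
      using assms by (simp add: field_simps)
    moreover have "0 \<le> s * u i - of_int \<lfloor>s * u i\<rfloor>" "s * u i - of_int \<lfloor>s * u i\<rfloor> \<le> 1" by linarith+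
    ultimately show ?thesis using assms by (auto intro!: power_mono divide_right_mono)
  qed
  then have "(\<Sum>i<a. (u i - of_int \<lfloor>s * u i\<rfloor> / s)\<^sup>2) \<le> (sqrt (real a) / s)\<^sup>2"
    using sum_mono[of "{..<a}" "\<lambda>i. (u i - of_int \<lfloor>s * u i\<rfloor> / s)\<^sup>2" "\<lambda>_. (1 / s)\<^sup>2"]
    by (simp add: power_divide)
  then show ?thesis unfolding vec_norm_def using assms by (simp add: real_le_lsqrt)
qed

lemma abs_floor_le: "real_of_int \<bar>\<lfloor>x\<rfloor>\<bar> \<le> \<bar>x\<bar> + 1"
  by (cases "x \<ge> 0") (simp_all add: abs_if, linarith+)

lemma sum_abs_floor_grid_le:
  assumes "s > 0"
  shows "(\<Sum>i<a. \<bar>\<lfloor>s * u i\<rfloor>\<bar>) \<le> s * sqrt (real a) * vec_norm a u + a"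
proof -
  have "real_of_int (\<Sum>i<a. \<bar>\<lfloor>s * u i\<rfloor>\<bar>) \<le> (\<Sum>i<a. s * \<bar>u i\<bar> + 1)"
    unfolding of_int_sum by (intro sum_mono) (metis abs_floor_le abs_mult abs_of_pos assms)
  also have "\<dots> \<le> s * sqrt (real a) * vec_norm a u + a"
    using mult_left_mono[OF sum_abs_le_sqrt_vec_norm[where a=a and u=u], of s] assms
    by (simp add: sum.distrib sum_distrib_left mult.assoc)
  finally show ?thesis by simp
qed

lemma floor_grid_in_int_l1_ball:
  assumes "a > 0" "vec_norm a u \<le> 1"
  shows "(\<lambda>i. if i < a then \<lfloor>4 * sqrt a * u i\<rfloor> else 0) \<in> int_l1_ball a (5 * a)"
proof -
  have "real_of_int (\<Sum>i<a. \<bar>\<lfloor>4 * sqrt a * u i\<rfloor>\<bar>) \<le> 4 * sqrt a * sqrt a * vec_norm a u + a"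
    using sum_abs_floor_grid_le[where s="4 * sqrt a" and a=a and u=u] assms by simp
  also have "\<dots> \<le> 4 * sqrt a * sqrt a * 1 + a"
    using assms by (intro add_right_mono mult_left_mono) auto
  also have "\<dots> = real (5 * a)" by simp
  finally have "(\<Sum>i<a. \<bar>\<lfloor>4 * sqrt a * u i\<rfloor>\<bar>) \<le> int (5 * a)" by (metis of_int_le_iff of_int_of_nat_eq)
  then show ?thesis unfolding int_l1_ball_def by simp
qed

text \<open>The net consists of the points of the grid \<open>(4 sqrt a)\<^sup>-\<^sup>1 \<int>\<^sup>a\<close> obtained by rounding down
  unit vectors; their integer coordinates lie in the \<open>\<ell>\<^sub>1\<close>-ball of radius \<open>5a\<close>, of size at most
  \<open>3\<^sup>a 2\<^sup>5\<^sup>a = 96\<^sup>a\<close>.\<close>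

lemma quarter_net_exists:
  assumes "a > 0"
  shows "\<exists>N. quarter_net a N \<and> real (card N) \<le> 96^a"
proof -
  define s where "s = 4 * sqrt (real a)"
  have s: "s > 0" unfolding s_def using assms by simp
  define rnd where "rnd u = (\<lambda>i. if i < a then \<lfloor>s * u i\<rfloor> else 0)" for u
  define emb where "emb z = (\<lambda>i. of_int (z i) / s)" for z :: "nat \<Rightarrow> int"
  define U where "U = {u. vec_norm a u \<le> 1}"
  have close: "vec_norm a (\<lambda>i. u i - emb (rnd u) i) \<le> 1/4" for u
  proof -
    have "vec_norm a (\<lambda>i. u i - emb (rnd u) i) = vec_norm a (\<lambda>i. u i - of_int \<lfloor>s * u i\<rfloor> / s)"
      unfolding vec_norm_def emb_def rnd_def by simp
    also have "\<dots> \<le> sqrt (real a) / s" by (rule vec_norm_diff_floor_grid[OF s])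
    finally show ?thesis unfolding s_def using assms by simp
  qed
  have "vec_norm a (emb (rnd u)) \<le> 5/4" if "u \<in> U" for u
  proof -
    have "vec_norm a (emb (rnd u)) \<le> vec_norm a u + vec_norm a (\<lambda>i. u i - emb (rnd u) i)"
      using vec_norm_triangle[where a=a and u=u and w="\<lambda>i. emb (rnd u) i - u i"]
      by (simp add: vec_norm_minus_commute)
    then show ?thesis using close[of u] that unfolding U_def by simp
  qed
  moreover have rnd_U: "rnd ` U \<subseteq> int_l1_ball a (5 * a)"
    using floor_grid_in_int_l1_ball[OF assms] unfolding rnd_def s_def U_def by auto
  then have "finite (rnd ` U)" using card_int_l1_ball_le(1) by (rule finite_subset)
  moreover have "real (card (emb ` rnd ` U)) \<le> 96^a"
  proof -
    have "card (emb ` rnd ` U) \<le> card (int_l1_ball a (5 * a))"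
      using rnd_U card_int_l1_ball_le(1) by (meson card_image_le card_mono finite_subset order_trans)
    then have "real (card (emb ` rnd ` U)) \<le> 3^a * 2^(5 * a)" using card_int_l1_ball_le(2)
      by (smt (verit) of_nat_le_iff)
    also have "(3::real)^a * 2^(5 * a) = 96^a" by (simp add: power_mult power_mult_distrib[symmetric])
    finally show ?thesis .
  qed
  ultimately show ?thesis
    unfolding quarter_net_def using close by (intro exI[of _ "emb ` rnd ` U"]) (auto simp: U_def)
qed

section \<open>Random blocks of parameters\<close>

lemma bilinear_form_lipschitz:
  assumes "\<And>p q. hs_dist a b (A p) (A q) \<le> param_dist L n dims p q"
  shows "\<bar>bilinear_form a b (A p) u v - bilinear_form a b (A q) u v\<bar>
           \<le> (vec_norm a u * vec_norm b v) * param_dist L n dims p q"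
proof -
  have "\<bar>bilinear_form a b (A p) u v - bilinear_form a b (A q) u v\<bar>
          \<le> vec_norm a u * vec_norm b v * hs_dist a b (A p) (A q)"
    using abs_bilinear_form_le_hs_norm[of a b _ u v] by (metis bilinear_form_diff_matrix hs_norm_diff)
  also have "\<dots> \<le> vec_norm a u * vec_norm b v * param_dist L n dims p q"
    using assms by (intro mult_left_mono) (auto simp: vec_norm_nonneg)
  finally show ?thesis .
qed

locale concentrated_params = prob_space M for M :: "params measure" +
  fixes L n :: nat and dims :: "nat \<Rightarrow> nat" and \<rho> :: real
  assumes sets_M: "sets M = sets borel"
    and conc: "subgauss_conc M (param_dist L n dims) \<rho>"
    and \<rho>_pos: "\<rho> > 0"
begin

lemma space_M: "space M = UNIV"
  using sets_eq_imp_space_eq[OF sets_M] by simp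

lemma lipschitz_measurable:
  "(\<And>p q. \<bar>f p - f q\<bar> \<le> K * param_dist L n dims p q) \<Longrightarrow> f \<in> borel_measurable M"
  using param_lipschitz_measurable sets_M by blast

lemma integral_bilinear_form_centered:
  assumes "\<And>i k. i < a \<Longrightarrow> k < b \<Longrightarrow> integrable M (\<lambda>p. A p i k) \<and> (\<integral>p. A p i k \<partial>M) = 0"
  shows "integrable M (\<lambda>p. bilinear_form a b (A p) u v)" "(\<integral>p. bilinear_form a b (A p) u v \<partial>M) = 0"
proof -
  have eq: "(\<lambda>p. bilinear_form a b (A p) u v) = (\<lambda>p. \<Sum>i<a. \<Sum>k<b. (u i * v k) * A p i k)"
    by (auto simp: bilinear_form_def mult_ac)
  show "integrable M (\<lambda>p. bilinear_form a b (A p) u v)" unfolding eq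
    using assms by (intro Bochner_Integration.integrable_sum Bochner_Integration.integrable_mult_left) auto
  have "(\<integral>p. (\<Sum>i<a. \<Sum>k<b. (u i * v k) * A p i k) \<partial>M) = (\<Sum>i<a. \<integral>p. (\<Sum>k<b. (u i * v k) * A p i k) \<partial>M)"
    using assms
    by (intro Bochner_Integration.integral_sum Bochner_Integration.integrable_sum
        Bochner_Integration.integrable_mult_left) auto
  also have "\<dots> = (\<Sum>i<a. \<Sum>k<b. \<integral>p. (u i * v k) * A p i k \<partial>M)"
    using assms
    by (intro sum.cong refl Bochner_Integration.integral_sum Bochner_Integration.integrable_mult_left) auto
  also have "\<dots> = 0"
    using assms by (intro sum.neutral ballI) (simp add: integral_mult_left_zero)
  finally show "(\<integral>p. bilinear_form a b (A p) u v \<partial>M) = 0" unfolding eq .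
qed

text \<open>For test vectors of norm at most 5/4 the bilinear form of a 1-Lipschitz centered block is a
  2-Lipschitz mean-zero variable, so its median is at most \<open>8 \<rho>\<close>.\<close>

lemma bilinear_form_tail:
  assumes lip: "\<And>p q. hs_dist a b (A p) (A q) \<le> param_dist L n dims p q"
    and cen: "\<And>i k. i < a \<Longrightarrow> k < b \<Longrightarrow> integrable M (\<lambda>p. A p i k) \<and> (\<integral>p. A p i k \<partial>M) = 0"
    and u: "vec_norm a u \<le> 5/4" and v: "vec_norm b v \<le> 5/4" and x: "x > 0"
  shows "measure M {p\<in>space M. bilinear_form a b (A p) u v > 8 * \<rho> + 2 * \<rho> * x} \<le> 2 * exp (- x\<^sup>2)"
proof -
  define Y where "Y p = bilinear_form a b (A p) u v" for p
  have lipY: "\<bar>Y p - Y q\<bar> \<le> 2 * param_dist L n dims p q" for p q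
  proof -
    have "vec_norm a u * vec_norm b v \<le> 2"
      using mult_mono[OF u v] by (simp add: vec_norm_nonneg)
    then show ?thesis
      unfolding Y_def
      using bilinear_form_lipschitz[OF lip, where p=p and q=q and u=u and v=v] param_dist_nonneg[of L n dims p q]
      by (meson order_trans mult_right_mono)
  qed
  have Y: "Y \<in> borel_measurable M" using lipschitz_measurable[OF lipY] .
  obtain m where med: "is_median M Y m" using median_exists[OF prob_space_axioms Y] by blast
  have "integrable M Y" "(\<integral>p. Y p \<partial>M) = 0"
    unfolding Y_def[abs_def] using integral_bilinear_form_centered[of a b A, OF cen] by blast+
  then have "\<bar>m\<bar> \<le> 4 * (2 * \<rho>)"
    by (intro abs_median_le_of_mean_zero[OF prob_space_axioms conc \<rho>_pos lipY _ Y _ _ med]) auto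
  then have "{p\<in>space M. Y p > 8 * \<rho> + 2 * \<rho> * x} \<subseteq> {p\<in>space M. \<bar>Y p - m\<bar> \<ge> 2 * \<rho> * x}" by auto
  then have "measure M {p\<in>space M. Y p > 8 * \<rho> + 2 * \<rho> * x} \<le> measure M {p\<in>space M. \<bar>Y p - m\<bar> \<ge> 2 * \<rho> * x}"
    using Y by (intro finite_measure_mono) measurable
  also have "\<dots> \<le> 2 * exp (- (2 * \<rho> * x)\<^sup>2 / (2 * \<rho>)\<^sup>2)"
    using \<rho>_pos x by (intro subgauss_conc_lipschitz[OF conc lipY _ med]) auto
  also have "\<dots> = 2 * exp (- x\<^sup>2)" using \<rho>_pos by (simp add: power_mult_distrib)
  finally show ?thesis unfolding Y_def by simp
qed

end

lemma ln_96_le_9: "ln (96::real) \<le> 9"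
proof -
  have "(2::real)^9 \<le> (exp 1)^9" using exp_ge_add_one_self[of 1] by (intro power_mono) auto
  then have "(96::real) \<le> exp 9" by (simp flip: exp_of_nat_mult)
  then have "ln (96::real) \<le> ln (exp 9)" by (subst ln_le_cancel_iff) auto
  then show ?thesis by simp
qed

definition block_bound :: "real \<Rightarrow> real \<Rightarrow> real \<Rightarrow> real \<Rightarrow> real" where
  "block_bound \<rho> a b s = \<rho> * (24 + 18 * (sqrt a + sqrt b) + 6 * s)"

lemma block_bound_ge_net_threshold:
  fixes a b :: nat
  assumes "s \<ge> 0" "\<rho> > 0"
  shows "3 * (8 * \<rho> + 2 * \<rho> * sqrt (ln 96 * (a + b) + s\<^sup>2)) \<le> block_bound \<rho> a b s"
proof -
  have "sqrt (ln 96 * a + ln 96 * b + s\<^sup>2) \<le> sqrt (ln 96 * a + ln 96 * b) + sqrt (s\<^sup>2)"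
    using assms by (intro sqrt_add_le_add_sqrt) auto
  also have "\<dots> \<le> sqrt (ln 96 * a) + sqrt (ln 96 * b) + sqrt (s\<^sup>2)"
    by (intro add_right_mono sqrt_add_le_add_sqrt) auto
  also have "\<dots> = sqrt (ln 96) * (sqrt a + sqrt b) + s" using assms by (simp add: real_sqrt_mult algebra_simps)
  also have "\<dots> \<le> 3 * (sqrt a + sqrt b) + s"
    using real_sqrt_le_mono[OF ln_96_le_9] by (intro add_right_mono mult_right_mono) auto
  finally have "6 * \<rho> * sqrt (ln 96 * (a + b) + s\<^sup>2) \<le> 6 * \<rho> * (3 * (sqrt a + sqrt b) + s)"
    using assms by (intro mult_left_mono) (auto simp: distrib_left)
  then show ?thesis unfolding block_bound_def by (simp add: algebra_simps)
qed

lemma net_union_bound_eq: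
  fixes a b :: nat
  shows "(96::real)^a * 96^b * (2 * exp (- (ln 96 * (a + b) + s\<^sup>2))) = 2 * exp (- s\<^sup>2)"
proof -
  have "exp (ln 96 * (a + b)) = (exp (ln 96))^(a + b)"
    using exp_of_nat_mult[of "a + b" "ln (96::real)"] by (simp add: mult.commute)
  then have "(96::real)^a * 96^b = exp (ln 96 * (a + b))" by (simp add: power_add)
  then show ?thesis by (simp add: exp_add[symmetric] exp_minus field_simps)
qed

context concentrated_params
begin

text \<open>Union bound over the product of two quarter nets, of sizes at most \<open>96\<^sup>a\<close> and \<open>96\<^sup>b\<close>.\<close>

lemma random_block_op_norm_bound:
  assumes lip: "\<And>p q. hs_dist a b (A p) (A q) \<le> param_dist L n dims p q"
    and cen: "\<And>i k. i < a \<Longrightarrow> k < b \<Longrightarrow> integrable M (\<lambda>p. A p i k) \<and> (\<integral>p. A p i k \<partial>M) = 0"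
    and a: "a > 0" and b: "b > 0" and s: "s \<ge> 0"
  shows "\<exists>G\<in>sets M. (\<forall>p\<in>G. op_norm_le a b (A p) (block_bound \<rho> a b s))
            \<and> measure M (space M - G) \<le> 2 * exp (- s\<^sup>2)"
proof -
  obtain Na where Na: "quarter_net a Na" "real (card Na) \<le> 96^a" using quarter_net_exists[OF a] by blast
  obtain Nb where Nb: "quarter_net b Nb" "real (card Nb) \<le> 96^b" using quarter_net_exists[OF b] by blast
  have fin: "finite (Na \<times> Nb)" using Na(1) Nb(1) unfolding quarter_net_def by simp
  define x where "x = sqrt (ln 96 * (a + b) + s\<^sup>2)"
  have x: "x > 0" unfolding x_def using a by (intro real_sqrt_gt_zero add_pos_nonneg) auto
  define T where "T = 8 * \<rho> + 2 * \<rho> * x"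
  define Bad where "Bad w = {p\<in>space M. bilinear_form a b (A p) (fst w) (snd w) > T}" for w
  have Bad: "Bad w \<in> sets M" for w
    using lipschitz_measurable[OF bilinear_form_lipschitz[OF lip]] unfolding Bad_def by measurable
  define G where "G = space M - (\<Union>w\<in>Na \<times> Nb. Bad w)"
  have "measure M (space M - G) = measure M (\<Union>w\<in>Na \<times> Nb. Bad w)"
    unfolding G_def using Bad by (simp add: Diff_Diff_Int Int_absorb1 Sup_le_iff sets.sets_into_space)
  also have "\<dots> \<le> (\<Sum>w\<in>Na \<times> Nb. measure M (Bad w))"
    using Bad fin by (intro finite_measure_subadditive_finite) auto
  also have "\<dots> \<le> (\<Sum>w\<in>Na \<times> Nb. 2 * exp (- x\<^sup>2))"
    using Na(1) Nb(1) unfolding quarter_net_def Bad_def T_def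
    by (intro sum_mono bilinear_form_tail[OF lip cen _ _ x]) auto
  also have "\<dots> \<le> 96^a * 96^b * (2 * exp (- x\<^sup>2))"
    using Na(2) Nb(2) by (simp add: card_cartesian_product mult_mono)
  also have "\<dots> = 2 * exp (- s\<^sup>2)"
    unfolding x_def using net_union_bound_eq[of a b s] a by simp
  finally have "measure M (space M - G) \<le> 2 * exp (- s\<^sup>2)" .
  moreover have "op_norm_le a b (A p) (block_bound \<rho> a b s)" if "p \<in> G" for p
  proof (rule op_norm_le_mono)
    show "op_norm_le a b (A p) (3 * T)"
      using that unfolding G_def Bad_def space_M
      by (intro op_norm_le_of_quarter_nets[OF Na(1) Nb(1)]) (auto simp: not_less)
    show "3 * T \<le> block_bound \<rho> a b s"
      unfolding T_def x_def using block_bound_ge_net_threshold[OF s \<rho>_pos, of a b] by simp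
  qed
  moreover have "G \<in> sets M" unfolding G_def using Bad fin by auto
  ultimately show ?thesis by blast
qed

end

section \<open>Concentration of functions that are Lipschitz on a large set\<close>

lemma mcshane_extension:
  fixes d :: "'a \<Rightarrow> 'a \<Rightarrow> real"
  assumes triangle: "\<And>p q r. d p r \<le> d p q + d q r" and commute: "\<And>p q. d p q = d q p"
    and self: "\<And>p. d p p = 0"
    and G: "G \<noteq> {}" and K: "K \<ge> 0"
    and lip: "\<And>p q. p \<in> G \<Longrightarrow> q \<in> G \<Longrightarrow> \<bar>Y p - Y q\<bar> \<le> K * d p q"
  obtains H where "\<And>p q. \<bar>H p - H q\<bar> \<le> K * d p q" and "\<And>p. p \<in> G \<Longrightarrow> H p = Y p"
proof -
  obtain q0 where q0: "q0 \<in> G" using G by auto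
  define H where "H p = Inf ((\<lambda>q. Y q + K * d p q) ` G)" for p
  have bdd: "bdd_below ((\<lambda>q. Y q + K * d p q) ` G)" for p
  proof (rule bdd_belowI2)
    fix q assume q: "q \<in> G"
    have "Y q0 - Y q \<le> K * d q0 q" using lip[OF q0 q] by simp
    also have "\<dots> \<le> K * (d q0 p + d p q)" using K triangle by (intro mult_left_mono) auto
    finally show "Y q0 - K * d q0 p \<le> Y q + K * d p q" by (simp add: algebra_simps)
  qed
  have H_le: "H p \<le> Y q + K * d p q" if "q \<in> G" for p q
    unfolding H_def using that bdd by (intro cInf_lower) auto
  have H_ge: "z \<le> H p" if "\<And>q. q \<in> G \<Longrightarrow> z \<le> Y q + K * d p q" for p z
    unfolding H_def using that G by (intro cInf_greatest) auto
  have H_step: "H p \<le> H p' + K * d p p'" for p p'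
  proof -
    have "H p - K * d p p' \<le> H p'"
    proof (rule H_ge)
      fix q assume q: "q \<in> G"
      have "d p q \<le> d p p' + d p' q" by (rule triangle)
      then have "H p \<le> Y q + K * (d p p' + d p' q)"
        using H_le[OF q, of p] K by (smt (verit) mult_left_mono)
      then show "H p - K * d p p' \<le> Y q + K * d p' q" by (simp add: algebra_simps)
    qed
    then show ?thesis by simp
  qed
  show ?thesis
  proof
    show "\<bar>H p - H q\<bar> \<le> K * d p q" for p q
      using H_step[of p q] H_step[of q p] commute[of p q] by (simp add: abs_le_iff)
    show "H p = Y p" if "p \<in> G" for p
      using H_le[OF that, of p] H_ge[where p=p and z="Y p"] lip[OF that] self by (force simp: abs_le_iff)
  qed
qed

lemma param_lipschitz_extension:
  assumes "G \<noteq> {}" "K \<ge> 0" "\<And>p q. p \<in> G \<Longrightarrow> q \<in> G \<Longrightarrow> \<bar>Y p - Y q\<bar> \<le> K * param_dist L n dims p q"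
  shows "\<exists>H. (\<forall>p q. \<bar>H p - H q\<bar> \<le> K * param_dist L n dims p q) \<and> (\<forall>p\<in>G. H p = Y p)"
proof (rule mcshane_extension[where d="param_dist L n dims", OF param_dist_triangle param_dist_commute
      param_dist_self assms])
  fix H
  assume "\<And>p q. \<bar>H p - H q\<bar> \<le> K * param_dist L n dims p q" "\<And>p. p \<in> G \<Longrightarrow> H p = Y p"
  then show ?thesis by (intro exI[of _ H]) simp
qed

lemma (in prob_space) medians_close_if_agree:
  assumes H: "H \<in> borel_measurable M" and medH: "is_median M H mH" and medY: "is_median M Y m"
    and small: "\<And>x. x > r \<Longrightarrow> measure M {p\<in>space M. \<bar>H p - mH\<bar> \<ge> x} < 1/4"
    and G: "G \<in> sets M" "measure M (space M - G) \<le> 1/4" and agree: "\<And>p. p \<in> G \<Longrightarrow> H p = Y p"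
  shows "\<bar>m - mH\<bar> \<le> r"
proof (rule ccontr)
  assume "\<not> \<bar>m - mH\<bar> \<le> r"
  then have far: "\<bar>m - mH\<bar> > r" by simp
  define E where "E = {p\<in>space M. \<bar>H p - mH\<bar> \<ge> \<bar>m - mH\<bar>} \<union> (space M - G)"
  have E_sets: "E \<in> sets M" unfolding E_def using H G(1) by measurable
  have "measure M E \<le> measure M {p\<in>space M. \<bar>H p - mH\<bar> \<ge> \<bar>m - mH\<bar>} + measure M (space M - G)"
    unfolding E_def using H G(1) by (intro measure_Un_le) auto
  also have "\<dots> < 1/2" using small[OF far] G(2) by linarith
  finally have E: "measure M E < 1/2" .
  show False
  proof (cases "m \<ge> mH")
    case True
    then have "{p\<in>space M. Y p \<ge> m} \<subseteq> E" unfolding E_def using agree by auto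
    then have "measure M {p\<in>space M. Y p \<ge> m} \<le> measure M E"
      using E_sets by (rule finite_measure_mono)
    then show False using medY E unfolding is_median_def by linarith
  next
    case False
    then have "{p\<in>space M. Y p \<le> m} \<subseteq> E" unfolding E_def using agree by auto
    then have "measure M {p\<in>space M. Y p \<le> m} \<le> measure M E"
      using E_sets by (rule finite_measure_mono)
    then show False using medY E unfolding is_median_def by linarith
  qed
qed

lemma two_exp_neg_4_lt: "2 * exp (-4::real) < 1/4"
proof -
  have "(2::real)^4 \<le> (exp 1)^4" using exp_ge_add_one_self[of 1] by (intro power_mono) auto
  then have "16 \<le> exp (4::real)" by (simp flip: exp_of_nat_mult)
  then show ?thesis by (simp add: exp_minus field_simps)
qed

context concentrated_params
begin

lemma concentration_of_lipschitz_on: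
  assumes G: "G \<in> sets M" "measure M (space M - G) \<le> \<delta>" and \<delta>: "\<delta> \<le> 1/4" and K: "K > 0"
    and lip: "\<And>p q. p \<in> G \<Longrightarrow> q \<in> G \<Longrightarrow> \<bar>Y p - Y q\<bar> \<le> K * param_dist L n dims p q"
    and med: "is_median M Y m" and t: "t > 2 * K * \<rho>"
  shows "measure M {p\<in>space M. \<bar>Y p - m\<bar> \<ge> t} \<le> \<delta> + 2 * exp (- (t - 2 * K * \<rho>)\<^sup>2 / (K * \<rho>)\<^sup>2)"
proof -
  have "G \<noteq> {}"
  proof
    assume "G = {}"
    then have "measure M (space M - G) = 1" by (simp add: prob_space)
    then show False using G(2) \<delta> by simp
  qed
  then have "\<exists>H. (\<forall>p q. \<bar>H p - H q\<bar> \<le> K * param_dist L n dims p q) \<and> (\<forall>p\<in>G. H p = Y p)"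
    using K lip by (intro param_lipschitz_extension) auto
  then obtain H where lipH: "\<And>p q. \<bar>H p - H q\<bar> \<le> K * param_dist L n dims p q"
    and agree: "\<And>p. p \<in> G \<Longrightarrow> H p = Y p"
    by blast
  have H: "H \<in> borel_measurable M" using lipschitz_measurable[OF lipH] .
  obtain mH where medH: "is_median M H mH" using median_exists[OF prob_space_axioms H] by blast
  have Kr: "K * \<rho> > 0" using K \<rho>_pos by simp
  have conc_H: "measure M {p\<in>space M. \<bar>H p - mH\<bar> \<ge> x} \<le> 2 * exp (- x\<^sup>2 / (K * \<rho>)\<^sup>2)" if "x > 0" for x
    by (rule subgauss_conc_lipschitz[OF conc lipH K medH that])
  have "measure M {p\<in>space M. \<bar>H p - mH\<bar> \<ge> x} < 1/4" if x: "x > 2 * K * \<rho>" for x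
  proof -
    have "4 * (K * \<rho>)\<^sup>2 \<le> x\<^sup>2"
      using power_mono[of "2 * K * \<rho>" x 2] x Kr by (simp add: power_mult_distrib)
    then have "4 \<le> x\<^sup>2 / (K * \<rho>)\<^sup>2" using K \<rho>_pos by (simp add: le_divide_eq)
    then have "exp (- x\<^sup>2 / (K * \<rho>)\<^sup>2) \<le> exp (-4)" by simp
    then have "2 * exp (- x\<^sup>2 / (K * \<rho>)\<^sup>2) < 1/4" using two_exp_neg_4_lt by linarith
    then show ?thesis using conc_H[of x] x Kr by simp
  qed
  then have close: "\<bar>m - mH\<bar> \<le> 2 * K * \<rho>"
    using G \<delta> by (intro medians_close_if_agree[OF H medH med _ G(1) _ agree]) auto
  have "{p\<in>space M. \<bar>Y p - m\<bar> \<ge> t} \<subseteq> {p\<in>space M. \<bar>H p - mH\<bar> \<ge> t - 2 * K * \<rho>} \<union> (space M - G)"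
    using agree close by force
  moreover have "space M - G \<in> sets M" using G by auto
  ultimately have "measure M {p\<in>space M. \<bar>Y p - m\<bar> \<ge> t}
             \<le> measure M ({p\<in>space M. \<bar>H p - mH\<bar> \<ge> t - 2 * K * \<rho>} \<union> (space M - G))"
    using H by (intro finite_measure_mono) measurable
  also have "\<dots> \<le> measure M {p\<in>space M. \<bar>H p - mH\<bar> \<ge> t - 2 * K * \<rho>} + measure M (space M - G)"
    using H G by (intro measure_Un_le) auto
  also have "\<dots> \<le> 2 * exp (- (t - 2 * K * \<rho>)\<^sup>2 / (K * \<rho>)\<^sup>2) + \<delta>"
    using conc_H[of "t - 2 * K * \<rho>"] t G by simp
  finally show ?thesis by simp
qed

end

section \<open>Layer-wise Lipschitz estimates\<close>

lemma hs_norm_Zlayer_Suc_le: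
  assumes "\<And>x. \<bar>\<sigma> l x\<bar> \<le> \<kappa>" "dims (Suc l) > 0"
  shows "hs_norm (dims (Suc l)) n (Zlayer dims \<sigma> p (Suc l)) \<le> \<kappa> * sqrt n"
proof -
  have \<kappa>: "\<kappa> \<ge> 0" using assms(1) by (meson abs_ge_zero order_trans)
  have "(Zlayer dims \<sigma> p (Suc l) i j)\<^sup>2 \<le> (\<kappa> / sqrt (dims (Suc l)))\<^sup>2" for i j
  proof -
    have "\<bar>Zlayer dims \<sigma> p (Suc l) i j\<bar> \<le> \<kappa> / sqrt (dims (Suc l))"
      using assms(1) by (simp add: abs_div divide_right_mono)
    then show ?thesis by (metis abs_ge_zero power2_abs power_mono)
  qed
  then have "(\<Sum>i<dims (Suc l). \<Sum>j<n. (Zlayer dims \<sigma> p (Suc l) i j)\<^sup>2)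
             \<le> (\<Sum>i<dims (Suc l). \<Sum>j<n. (\<kappa> / sqrt (dims (Suc l)))\<^sup>2)"
    by (intro sum_mono)
  also have "\<dots> = (\<kappa> * sqrt n)\<^sup>2" using assms(2) by (simp add: power_divide power_mult_distrib)
  finally show ?thesis unfolding hs_norm_def using \<kappa> by (simp add: real_sqrt_le_iff real_le_lsqrt)
qed

lemma hs_dist_Zlayer_0:
  "dims 0 > 0 \<Longrightarrow>
    hs_dist (dims 0) n (Zlayer dims \<sigma> p 0) (Zlayer dims \<sigma> q 0) = hs_dist (dims 0) n (pX p) (pX q) / sqrt (dims 0)"
  by (simp add: hs_dist_divide[symmetric])

lemma hs_dist_scaled_activation_le:
  assumes lip: "\<And>x y. \<bar>f x - f y\<bar> \<le> lam * \<bar>x - y\<bar>" and lam: "lam \<ge> 0"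
  shows "hs_dist a n (\<lambda>i j. f (X i j) / sqrt a) (\<lambda>i j. f (Y i j) / sqrt a)
           \<le> lam / sqrt a * hs_norm a n (\<lambda>i j. X i j - Y i j)"
proof -
  have "((f (X i j) - f (Y i j)) / sqrt a)\<^sup>2 \<le> (lam / sqrt a)\<^sup>2 * (X i j - Y i j)\<^sup>2" for i j
  proof -
    have "\<bar>f (X i j) - f (Y i j)\<bar>\<^sup>2 \<le> (lam * \<bar>X i j - Y i j\<bar>)\<^sup>2" using lip by (intro power_mono) auto
    then show ?thesis by (simp add: power_divide power_mult_distrib divide_right_mono)
  qed
  then have "hs_dist a n (\<lambda>i j. f (X i j) / sqrt a) (\<lambda>i j. f (Y i j) / sqrt a)
             \<le> sqrt (\<Sum>i<a. \<Sum>j<n. (lam / sqrt a)\<^sup>2 * (X i j - Y i j)\<^sup>2)"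
    unfolding hs_dist_def by (intro real_sqrt_le_mono sum_mono) (simp add: diff_divide_distrib)
  also have "\<dots> = lam / sqrt a * hs_norm a n (\<lambda>i j. X i j - Y i j)"
    unfolding hs_norm_def using lam by (simp add: sum_distrib_left[symmetric] real_sqrt_mult real_sqrt_divide)
  finally show ?thesis .
qed

text \<open>Split \<open>W\<^sub>p Z\<^sub>p - W\<^sub>q Z\<^sub>q = W\<^sub>p (Z\<^sub>p - Z\<^sub>q) + (W\<^sub>p - W\<^sub>q) Z\<^sub>q\<close> and use operator-norm bounds on
  \<open>W\<^sub>p\<close> and \<open>Z\<^sub>q\<close>.\<close>

lemma hs_dist_Zlayer_Suc_le:
  fixes p q :: params
  assumes lip\<sigma>: "\<And>x y. \<bar>\<sigma> l x - \<sigma> l y\<bar> \<le> lam * \<bar>x - y\<bar>" and lam: "lam \<ge> 0" and l: "l < L"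
    and W: "op_norm_le (dims (Suc l)) (dims l) (pW p l) R" and R: "R \<ge> 0"
    and Z: "op_norm_le (dims l) n (Zlayer dims \<sigma> q l) \<zeta>" and \<zeta>: "\<zeta> \<ge> 0"
  shows "hs_dist (dims (Suc l)) n (Zlayer dims \<sigma> p (Suc l)) (Zlayer dims \<sigma> q (Suc l))
         \<le> lam / sqrt (dims (Suc l)) * (R * hs_dist (dims l) n (Zlayer dims \<sigma> p l) (Zlayer dims \<sigma> q l)
              + (\<zeta> + sqrt n) * param_dist L n dims p q)"
proof -
  let ?a = "dims (Suc l)" and ?b = "dims l" and ?d = "param_dist L n dims p q"
  let ?Zp = "Zlayer dims \<sigma> p l" and ?Zq = "Zlayer dims \<sigma> q l"
  define pre where "pre r i j = (\<Sum>k<?b. pW r l i k * Zlayer dims \<sigma> r l k j) + pB r l i" for r i j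
  define T1 where "T1 = mat_mult ?b (pW p l) (\<lambda>k j. ?Zp k j - ?Zq k j)"
  define T2 where "T2 = mat_mult ?b (\<lambda>i k. pW p l i k - pW q l i k) ?Zq"
  define T3 where "T3 = (\<lambda>i (j::nat). pB p l i - pB q l i)"
  have dec: "pre p i j - pre q i j = (T1 i j + T2 i j) + T3 i j" for i j
    unfolding pre_def T1_def T2_def T3_def mat_mult_def
    by (simp add: algebra_simps sum_subtractf[symmetric] sum.distrib[symmetric])
  have "hs_norm ?a n (\<lambda>i j. pre p i j - pre q i j) = hs_norm ?a n (\<lambda>i j. (T1 i j + T2 i j) + T3 i j)"
    by (simp add: dec)
  also have "\<dots> \<le> hs_norm ?a n T1 + hs_norm ?a n T2 + hs_norm ?a n T3"
    using hs_norm_triangle[of ?a n "\<lambda>i j. T1 i j + T2 i j" T3] hs_norm_triangle[of ?a n T1 T2] by simp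
  also have "\<dots> \<le> R * hs_dist ?b n ?Zp ?Zq + \<zeta> * ?d + sqrt n * ?d"
  proof (intro add_mono)
    show "hs_norm ?a n T1 \<le> R * hs_dist ?b n ?Zp ?Zq"
      unfolding T1_def using hs_norm_mat_mult_left_le[OF W R, of n "\<lambda>k j. ?Zp k j - ?Zq k j"]
      by (simp add: hs_norm_diff)
    have "hs_norm ?a n T2 \<le> \<zeta> * hs_dist ?a ?b (pW p l) (pW q l)"
      unfolding T2_def using hs_norm_mat_mult_right_le[OF Z \<zeta>, of ?a "\<lambda>i k. pW p l i k - pW q l i k"]
      by (simp add: hs_norm_diff)
    then show "hs_norm ?a n T2 \<le> \<zeta> * ?d"
      using hs_dist_pW_le_param_dist[OF l, where dims=dims and p=p and q=q and n=n] \<zeta>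
      by (meson mult_left_mono order_trans)
    have "hs_norm ?a n T3 = sqrt n * sqrt (\<Sum>i<?a. (pB p l i - pB q l i)\<^sup>2)"
      unfolding hs_norm_def T3_def by (simp add: real_sqrt_mult[symmetric] sum_distrib_left)
    then show "hs_norm ?a n T3 \<le> sqrt n * ?d"
      using bias_dist_le_param_dist[OF l, where dims=dims and p=p and q=q and n=n] by (simp add: mult_left_mono)
  qed
  finally have "hs_norm ?a n (\<lambda>i j. pre p i j - pre q i j) \<le> R * hs_dist ?b n ?Zp ?Zq + (\<zeta> + sqrt n) * ?d"
    by (simp add: algebra_simps)
  then have "lam / sqrt ?a * hs_norm ?a n (\<lambda>i j. pre p i j - pre q i j)
             \<le> lam / sqrt ?a * (R * hs_dist ?b n ?Zp ?Zq + (\<zeta> + sqrt n) * ?d)"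
    using lam by (intro mult_left_mono) auto
  moreover have "hs_dist ?a n (Zlayer dims \<sigma> p (Suc l)) (Zlayer dims \<sigma> q (Suc l))
                 \<le> lam / sqrt ?a * hs_norm ?a n (\<lambda>i j. pre p i j - pre q i j)"
    using hs_dist_scaled_activation_le[OF lip\<sigma> lam, of ?a n "pre p" "pre q"] by (simp add: pre_def)
  ultimately show ?thesis by linarith
qed

section \<open>Explicit constants\<close>

text \<open>On the good event each block obeys \<open>block_bound\<close> with deviation \<open>s = sqrt (log_blocks L + 4 c \<kappa>\<^sup>2 n)\<close>;
  the summand \<open>ln (8 (L + 1))\<close> makes the \<open>L + 1\<close> failure probabilities \<open>2 exp (- s\<^sup>2)\<close> add up to
  \<open>exp (- 4 c \<kappa>\<^sup>2 n) / 4\<close>. In terms of the model parameters, \<open>lip_rate\<close> and \<open>lip_shift\<close> bound the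
  coefficients of the one-layer recursion of Lipschitz constants and \<open>lip_first\<close> its initial value.\<close>

definition eta1 :: "real \<Rightarrow> real" where
  "eta1 \<eta> = max \<eta> 1"

definition log_blocks :: "nat \<Rightarrow> real" where
  "log_blocks L = ln (8 * (real L + 1))"

definition lip_rate :: "nat \<Rightarrow> real \<Rightarrow> real \<Rightarrow> real \<Rightarrow> real \<Rightarrow> real \<Rightarrow> real \<Rightarrow> real" where
  "lip_rate L \<rho> lam \<kappa> \<alpha> \<beta> c = lam * \<rho> * (42 + 18 * sqrt \<beta> + 6 * sqrt (log_blocks L + 4 * c * \<kappa>\<^sup>2 * \<alpha>))"

definition lip_shift :: "real \<Rightarrow> real \<Rightarrow> real \<Rightarrow> real" where
  "lip_shift lam \<kappa> \<alpha> = lam * (\<kappa> + 1) * sqrt \<alpha>"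

definition lip_input :: "nat \<Rightarrow> real \<Rightarrow> real \<Rightarrow> real \<Rightarrow> real \<Rightarrow> real \<Rightarrow> real \<Rightarrow> real" where
  "lip_input L \<rho> lam \<kappa> \<alpha> \<eta> c = lam * \<rho> * (42 * sqrt (\<alpha> / eta1 \<eta>) + 18 * sqrt \<alpha>
     + 6 * sqrt ((log_blocks L + 4 * c * \<kappa>\<^sup>2) * \<alpha> / eta1 \<eta>))"

definition lip_first :: "nat \<Rightarrow> real \<Rightarrow> real \<Rightarrow> real \<Rightarrow> real \<Rightarrow> real \<Rightarrow> real \<Rightarrow> real \<Rightarrow> real" where
  "lip_first L \<rho> lam \<kappa> \<alpha> \<beta> \<eta> c =
     lip_rate L \<rho> lam \<kappa> \<alpha> \<beta> c / sqrt (eta1 \<eta>) + lip_input L \<rho> lam \<kappa> \<alpha> \<eta> c + lam * sqrt \<alpha>"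

fun affine_iter :: "real \<Rightarrow> real \<Rightarrow> real \<Rightarrow> nat \<Rightarrow> real" where
  "affine_iter r w k 0 = k"
| "affine_iter r w k (Suc j) = r * affine_iter r w k j + w"

text \<open>The summand \<open>sqrt \<alpha>\<close> only serves to make the constant positive.\<close>

definition lip_const :: "nat \<Rightarrow> real \<Rightarrow> real \<Rightarrow> real \<Rightarrow> real \<Rightarrow> real \<Rightarrow> real \<Rightarrow> real \<Rightarrow> real" where
  "lip_const L \<rho> lam \<kappa> \<alpha> \<beta> \<eta> c =
     affine_iter (lip_rate L \<rho> lam \<kappa> \<alpha> \<beta> c) (lip_shift lam \<kappa> \<alpha>) (lip_first L \<rho> lam \<kappa> \<alpha> \<beta> \<eta> c) (L - 1) + sqrt \<alpha>"

lemma log_blocks_nonneg: "log_blocks L \<ge> 0"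
  unfolding log_blocks_def by simp

lemma log_blocks_failures: "(real L + 1) * (2 * exp (- (log_blocks L + x))) = exp (- x) / 4"
proof -
  have "exp (- (log_blocks L + x)) = exp (- x) / exp (log_blocks L)" by (simp add: exp_diff exp_minus field_simps)
  also have "exp (log_blocks L) = 8 * (real L + 1)" unfolding log_blocks_def by simp
  finally show ?thesis by (simp add: field_simps add_pos_pos)
qed

lemma affine_iter_nonneg: "r \<ge> 0 \<Longrightarrow> w \<ge> 0 \<Longrightarrow> k \<ge> 0 \<Longrightarrow> affine_iter r w k j \<ge> 0"
  by (induction j) auto

lemma lip_constants_nonneg:
  assumes "lam \<ge> 0" "\<kappa> \<ge> 0" "\<alpha> \<ge> 0" "\<beta> \<ge> 0" "\<rho> > 0" "c \<ge> 0"
  shows "lip_rate L \<rho> lam \<kappa> \<alpha> \<beta> c \<ge> 0" "lip_shift lam \<kappa> \<alpha> \<ge> 0" "lip_first L \<rho> lam \<kappa> \<alpha> \<beta> \<eta> c \<ge> 0"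
proof -
  have "eta1 \<eta> \<ge> 1" unfolding eta1_def by simp
  note facts = assms this log_blocks_nonneg[of L]
  show rate: "lip_rate L \<rho> lam \<kappa> \<alpha> \<beta> c \<ge> 0"
    unfolding lip_rate_def using facts by (intro mult_nonneg_nonneg add_nonneg_nonneg) auto
  show "lip_shift lam \<kappa> \<alpha> \<ge> 0" unfolding lip_shift_def using facts by simp
  have "lip_input L \<rho> lam \<kappa> \<alpha> \<eta> c \<ge> 0"
    unfolding lip_input_def using facts by (intro mult_nonneg_nonneg add_nonneg_nonneg) auto
  then show "lip_first L \<rho> lam \<kappa> \<alpha> \<beta> \<eta> c \<ge> 0"
    unfolding lip_first_def using rate facts by (intro add_nonneg_nonneg) auto
qed

lemma lip_const_pos:
  assumes "lam \<ge> 0" "\<kappa> \<ge> 0" "\<alpha> > 0" "\<beta> \<ge> 0" "\<rho> > 0" "c \<ge> 0"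
  shows "lip_const L \<rho> lam \<kappa> \<alpha> \<beta> \<eta> c > 0"
  using affine_iter_nonneg[OF lip_constants_nonneg] assms unfolding lip_const_def
  by (simp add: add_nonneg_pos)

lemma sqrt_divide_le: "x \<ge> 0 \<Longrightarrow> y > 0 \<Longrightarrow> x / y \<le> z \<Longrightarrow> sqrt x / sqrt y \<le> sqrt z"
  by (simp add: real_sqrt_divide[symmetric])

lemma lip_rate_bound:
  fixes a b n s :: real
  assumes a: "a \<ge> 1" and b: "b \<ge> 0" "b / a \<le> \<beta>" and n: "n \<ge> 0" "n / a \<le> \<alpha>"
    and s: "s \<ge> 0" "s\<^sup>2 = log_blocks L + 4 * c * \<kappa>\<^sup>2 * n" and c: "c \<ge> 0"
    and lam: "lam \<ge> 0" and \<rho>: "\<rho> > 0"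
  shows "lam / sqrt a * block_bound \<rho> a b s \<le> lip_rate L \<rho> lam \<kappa> \<alpha> \<beta> c"
proof -
  have sa: "sqrt a \<ge> 1" using a by simp
  have "24 / sqrt a \<le> 24" using sa by (simp add: divide_le_eq)
  moreover have "sqrt b / sqrt a \<le> sqrt \<beta>" using a b by (intro sqrt_divide_le) auto
  moreover have "s / sqrt a \<le> sqrt (log_blocks L + 4 * c * \<kappa>\<^sup>2 * \<alpha>)"
  proof -
    have "log_blocks L / a \<le> log_blocks L"
      using a log_blocks_nonneg[of L] by (simp add: divide_le_eq mult_le_cancel_left1)
    moreover have "4 * c * \<kappa>\<^sup>2 * (n / a) \<le> 4 * c * \<kappa>\<^sup>2 * \<alpha>" using n c by (intro mult_left_mono) auto
    ultimately have "s\<^sup>2 / a \<le> log_blocks L + 4 * c * \<kappa>\<^sup>2 * \<alpha>"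
      unfolding s(2) by (simp add: add_divide_distrib)
    then have "sqrt (s\<^sup>2) / sqrt a \<le> sqrt (log_blocks L + 4 * c * \<kappa>\<^sup>2 * \<alpha>)"
      using a by (intro sqrt_divide_le) auto
    then show ?thesis using s(1) by simp
  qed
  moreover have "block_bound \<rho> a b s / sqrt a = \<rho> * (24 / sqrt a + 18 + 18 * (sqrt b / sqrt a) + 6 * (s / sqrt a))"
    unfolding block_bound_def using sa by (simp add: field_simps)
  ultimately have "block_bound \<rho> a b s / sqrt a \<le> \<rho> * (42 + 18 * sqrt \<beta> + 6 * sqrt (log_blocks L + 4 * c * \<kappa>\<^sup>2 * \<alpha>))"
    using \<rho> by (simp add: mult_left_mono)
  then have "lam * (block_bound \<rho> a b s / sqrt a)
      \<le> lam * (\<rho> * (42 + 18 * sqrt \<beta> + 6 * sqrt (log_blocks L + 4 * c * \<kappa>\<^sup>2 * \<alpha>)))"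
    using lam by (rule mult_left_mono)
  then show ?thesis unfolding lip_rate_def by (simp add: mult.assoc)
qed

lemma lip_shift_bound:
  fixes a n :: real
  assumes "a > 0" "n \<ge> 0" "n / a \<le> \<alpha>" "\<kappa> \<ge> 0" "lam \<ge> 0"
  shows "lam / sqrt a * (\<kappa> * sqrt n + sqrt n) \<le> lip_shift lam \<kappa> \<alpha>"
proof -
  have "sqrt n / sqrt a \<le> sqrt \<alpha>" using assms by (intro sqrt_divide_le) auto
  then have "lam * (\<kappa> + 1) * (sqrt n / sqrt a) \<le> lam * (\<kappa> + 1) * sqrt \<alpha>"
    using assms by (intro mult_left_mono) auto
  then show ?thesis unfolding lip_shift_def by (simp add: field_simps)
qed

lemma lip_input_bound:
  fixes a0 a1 n s :: real
  assumes a0: "a0 \<ge> eta1 \<eta>" and a1: "a1 \<ge> 1" and n: "n \<ge> 1" "n / a1 \<le> \<alpha>"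
    and s: "s \<ge> 0" "s\<^sup>2 = log_blocks L + 4 * c * \<kappa>\<^sup>2 * n" and c: "c \<ge> 0"
    and lam: "lam \<ge> 0" and \<rho>: "\<rho> > 0"
  shows "lam * block_bound \<rho> a0 n s / (sqrt a0 * sqrt a1) \<le> lip_input L \<rho> lam \<kappa> \<alpha> \<eta> c"
proof -
  define e where "e = eta1 \<eta>"
  have e: "e \<ge> 1" "a0 \<ge> e" unfolding e_def eta1_def using a0 by (auto simp: eta1_def)
  then have a0_pos: "a0 > 0" by simp
  have "1 / a1 \<le> \<alpha>" using n a1 by (smt (verit) divide_right_mono)
  then have i1: "1 / (a0 * a1) \<le> \<alpha> / e" and i2: "n / (a0 * a1) \<le> \<alpha> / e"
    using mult_mono[of "1 / a0" "1 / e" "1 / a1" \<alpha>] mult_mono[of "1 / a0" "1 / e" "n / a1" \<alpha>] e a1 n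
    by (simp_all add: divide_le_eq)
  have sq: "sqrt a0 * sqrt a1 = sqrt (a0 * a1)" by (simp add: real_sqrt_mult)
  have "1 / (sqrt a0 * sqrt a1) \<le> sqrt (\<alpha> / e)"
    unfolding sq using i1 a0_pos a1 by (metis real_sqrt_divide real_sqrt_le_mono real_sqrt_one)
  moreover have "sqrt a0 / (sqrt a0 * sqrt a1) \<le> sqrt \<alpha>"
    using \<open>1 / a1 \<le> \<alpha>\<close> a0_pos a1 sqrt_divide_le[of 1 a1 \<alpha>] by simp
  moreover have "sqrt n / (sqrt a0 * sqrt a1) \<le> sqrt (\<alpha> / e)"
    unfolding sq using i2 a0_pos a1 n by (intro sqrt_divide_le) auto
  moreover have "s / (sqrt a0 * sqrt a1) \<le> sqrt ((log_blocks L + 4 * c * \<kappa>\<^sup>2) * \<alpha> / e)"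
  proof -
    have "s\<^sup>2 / (a0 * a1) = log_blocks L * (1 / (a0 * a1)) + 4 * c * \<kappa>\<^sup>2 * (n / (a0 * a1))"
      unfolding s(2) by (simp add: add_divide_distrib)
    also have "\<dots> \<le> log_blocks L * (\<alpha> / e) + 4 * c * \<kappa>\<^sup>2 * (\<alpha> / e)"
      using i1 i2 log_blocks_nonneg[of L] c by (intro add_mono mult_left_mono) auto
    finally have "s\<^sup>2 / (a0 * a1) \<le> (log_blocks L + 4 * c * \<kappa>\<^sup>2) * \<alpha> / e"
      by (simp add: algebra_simps add_divide_distrib)
    then have "sqrt (s\<^sup>2) / sqrt (a0 * a1) \<le> sqrt ((log_blocks L + 4 * c * \<kappa>\<^sup>2) * \<alpha> / e)"
      using a0_pos a1 by (intro sqrt_divide_le) auto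
    then show ?thesis unfolding sq using s(1) by simp
  qed
  moreover have "block_bound \<rho> a0 n s / (sqrt a0 * sqrt a1) = \<rho> * (24 * (1 / (sqrt a0 * sqrt a1))
      + 18 * (sqrt a0 / (sqrt a0 * sqrt a1)) + 18 * (sqrt n / (sqrt a0 * sqrt a1)) + 6 * (s / (sqrt a0 * sqrt a1)))"
    unfolding block_bound_def using a0_pos a1 by (simp add: field_simps)
  ultimately have "block_bound \<rho> a0 n s / (sqrt a0 * sqrt a1)
      \<le> \<rho> * (42 * sqrt (\<alpha> / e) + 18 * sqrt \<alpha> + 6 * sqrt ((log_blocks L + 4 * c * \<kappa>\<^sup>2) * \<alpha> / e))"
    using \<rho> by (simp add: mult_left_mono)
  then have "lam * (block_bound \<rho> a0 n s / (sqrt a0 * sqrt a1))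
      \<le> lam * (\<rho> * (42 * sqrt (\<alpha> / e) + 18 * sqrt \<alpha> + 6 * sqrt ((log_blocks L + 4 * c * \<kappa>\<^sup>2) * \<alpha> / e)))"
    using lam by (rule mult_left_mono)
  then show ?thesis unfolding lip_input_def e_def by (simp add: mult.assoc)
qed

section \<open>Networks under Assumption A1\<close>

lemma (in prob_space) measure_compl_Int_INT_le:
  fixes L :: nat
  assumes "A \<in> sets M" "\<And>l. l < L \<Longrightarrow> B l \<in> sets M"
  shows "measure M (space M - (A \<inter> (\<Inter>l<L. B l)))
           \<le> measure M (space M - A) + (\<Sum>l<L. measure M (space M - B l))"
proof -
  have "space M - (A \<inter> (\<Inter>l<L. B l)) = (space M - A) \<union> (\<Union>l<L. space M - B l)" by auto
  moreover have "(\<Union>l<L. space M - B l) \<in> sets M" using assms(2) by (intro sets.finite_UN) simp_all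
  ultimately have "measure M (space M - (A \<inter> (\<Inter>l<L. B l)))
                   \<le> measure M (space M - A) + measure M (\<Union>l<L. space M - B l)"
    using assms(1) by (simp add: measure_Un_le)
  also have "measure M (\<Union>l<L. space M - B l) \<le> (\<Sum>l<L. measure M (space M - B l))"
    using assms(2) by (intro finite_measure_subadditive_finite) auto
  finally show ?thesis by simp
qed

locale A1_model =
  fixes L n :: nat and dims :: "nat \<Rightarrow> nat" and \<sigma> :: "nat \<Rightarrow> real \<Rightarrow> real" and M :: "params measure"
    and \<rho> lam \<kappa> \<alpha> \<beta> \<eta> :: real
  assumes A1: "A1 L n dims \<sigma> M \<rho> lam \<kappa> \<alpha> \<beta> \<eta>" and \<rho>_pos: "\<rho> > 0"
begin

lemma L_pos: "L > 0" and n_pos: "n > 0" and dims_pos: "l \<le> L \<Longrightarrow> dims l > 0"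
  and \<sigma>_lipschitz: "l < L \<Longrightarrow> \<bar>\<sigma> l x - \<sigma> l y\<bar> \<le> lam * \<bar>x - y\<bar>"
  and \<sigma>_bounded: "l < L \<Longrightarrow> \<bar>\<sigma> l x\<bar> \<le> \<kappa>"
  and \<eta>_le: "\<eta> \<le> real (dims 0)"
  using A1 unfolding A1_def by blast+

lemma \<alpha>_ge: "l < L \<Longrightarrow> real n / real (dims (Suc l)) \<le> \<alpha>"
  and \<beta>_ge: "l < L \<Longrightarrow> real (dims l) / real (dims (Suc l)) \<le> \<beta>"
proof -
  assume "l < L"
  then have l: "Suc l \<in> {1..L}" by simp
  have A: "\<forall>l\<in>{1..L}. real n / real (dims l) \<le> \<alpha>"
    and B: "\<forall>l\<in>{1..L}. real (dims (l - 1)) / real (dims l) \<le> \<beta>"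
    using A1 unfolding A1_def by blast+
  show "real n / real (dims (Suc l)) \<le> \<alpha>" using bspec[OF A l] by simp
  show "real (dims l) / real (dims (Suc l)) \<le> \<beta>" using bspec[OF B l] by simp
qed

lemma lam_nonneg: "lam \<ge> 0"
  using \<sigma>_lipschitz[OF L_pos, of 1 0] abs_ge_zero[of "\<sigma> 0 1 - \<sigma> 0 0"] by simp

lemma \<kappa>_nonneg: "\<kappa> \<ge> 0"
  using \<sigma>_bounded[OF L_pos, of 0] abs_ge_zero[of "\<sigma> 0 0"] by linarith

lemma \<alpha>_pos: "\<alpha> > 0"
proof -
  have "real n / real (dims 1) > 0" using n_pos dims_pos[of 1] L_pos by simp
  then show ?thesis using \<alpha>_ge[OF L_pos] by simp
qed

lemma \<beta>_nonneg: "\<beta> \<ge> 0"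
  by (rule order_trans[OF _ \<beta>_ge[OF L_pos]]) simp

lemma dims_ge_1: "l \<le> L \<Longrightarrow> real (dims l) \<ge> 1"
  using dims_pos by (simp add: Suc_le_eq)

lemma eta1_le_dims_0: "eta1 \<eta> \<le> real (dims 0)"
  unfolding eta1_def using \<eta>_le dims_ge_1[of 0] by simp

sublocale concentrated_params M L n dims \<rho>
proof -
  have "prob_space M" "sets M = sets borel" "subgauss_conc M (param_dist L n dims) \<rho>"
    using A1 unfolding A1_def by blast+
  then show "concentrated_params M L n dims \<rho>"
    using \<rho>_pos by (simp add: concentrated_params_def concentrated_params_axioms_def)
qed

definition dev :: "real \<Rightarrow> real" where
  "dev c = sqrt (log_blocks L + 4 * c * \<kappa>\<^sup>2 * n)"

lemma dev_nonneg: "c \<ge> 0 \<Longrightarrow> dev c \<ge> 0"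
  and dev_squared: "c \<ge> 0 \<Longrightarrow> (dev c)\<^sup>2 = log_blocks L + 4 * c * \<kappa>\<^sup>2 * n"
  unfolding dev_def using log_blocks_nonneg[of L] by auto

definition good_params :: "real \<Rightarrow> params set" where
  "good_params c = {p. op_norm_le (dims 0) n (pX p) (block_bound \<rho> (dims 0) n (dev c)) \<and>
     (\<forall>l<L. op_norm_le (dims (Suc l)) (dims l) (pW p l) (block_bound \<rho> (dims (Suc l)) (dims l) (dev c)))}"

lemma good_event_exists:
  assumes c: "c \<ge> 0"
  shows "\<exists>G\<in>sets M. G \<subseteq> good_params c \<and> measure M (space M - G) \<le> exp (- (4 * c * \<kappa>\<^sup>2 * n)) / 4"
proof -
  obtain GX where GX: "GX \<in> sets M" "\<forall>p\<in>GX. op_norm_le (dims 0) n (pX p) (block_bound \<rho> (dims 0) n (dev c))"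
    "measure M (space M - GX) \<le> 2 * exp (- (dev c)\<^sup>2)"
    using random_block_op_norm_bound[where A=pX, OF hs_dist_pX_le_param_dist _ _ _ dev_nonneg[OF c]]
      A1 n_pos dims_pos[of 0] unfolding A1_def by auto
  have "\<forall>l\<in>{..<L}. \<exists>G. G \<in> sets M \<and>
          (\<forall>p\<in>G. op_norm_le (dims (Suc l)) (dims l) (pW p l) (block_bound \<rho> (dims (Suc l)) (dims l) (dev c)))
          \<and> measure M (space M - G) \<le> 2 * exp (- (dev c)\<^sup>2)"
  proof
    fix l assume l: "l \<in> {..<L}"
    show "\<exists>G. G \<in> sets M \<and>
          (\<forall>p\<in>G. op_norm_le (dims (Suc l)) (dims l) (pW p l) (block_bound \<rho> (dims (Suc l)) (dims l) (dev c)))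
          \<and> measure M (space M - G) \<le> 2 * exp (- (dev c)\<^sup>2)"
      using random_block_op_norm_bound[where A="\<lambda>p. pW p l", OF hs_dist_pW_le_param_dist _ _ _ dev_nonneg[OF c]]
        A1 l dims_pos[of l] dims_pos[of "Suc l"] unfolding A1_def by auto
  qed
  from bchoice[OF this] obtain GW where GW: "\<forall>l\<in>{..<L}. GW l \<in> sets M \<and>
          (\<forall>p\<in>GW l. op_norm_le (dims (Suc l)) (dims l) (pW p l) (block_bound \<rho> (dims (Suc l)) (dims l) (dev c)))
          \<and> measure M (space M - GW l) \<le> 2 * exp (- (dev c)\<^sup>2)"
    by blast
  define G where "G = GX \<inter> (\<Inter>l<L. GW l)"
  have "measure M (space M - G) \<le> measure M (space M - GX) + (\<Sum>l<L. measure M (space M - GW l))"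
    unfolding G_def using GX(1) GW by (intro measure_compl_Int_INT_le) auto
  also have "\<dots> \<le> (real L + 1) * (2 * exp (- (log_blocks L + 4 * c * \<kappa>\<^sup>2 * n)))"
    using GX(3) GW sum_mono[of "{..<L}" "\<lambda>l. measure M (space M - GW l)" "\<lambda>_. 2 * exp (- (dev c)\<^sup>2)"]
    unfolding dev_squared[OF c] by (simp add: algebra_simps)
  finally have "measure M (space M - G) \<le> exp (- (4 * c * \<kappa>\<^sup>2 * n)) / 4"
    unfolding log_blocks_failures .
  moreover have "G \<in> sets M" unfolding G_def using GX(1) GW L_pos by auto
  moreover have "G \<subseteq> good_params c" unfolding G_def good_params_def using GX(2) GW by auto
  ultimately show ?thesis by blast
qed

lemma layer_rate_le:
  assumes "l < L" "c \<ge> 0"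
  shows "lam / sqrt (dims (Suc l)) * block_bound \<rho> (dims (Suc l)) (dims l) (dev c) \<le> lip_rate L \<rho> lam \<kappa> \<alpha> \<beta> c"
  using assms dims_ge_1[of "Suc l"] \<beta>_ge[of l] \<alpha>_ge[of l] dev_nonneg[OF assms(2)] dev_squared[OF assms(2)]
    lam_nonneg \<rho>_pos
  by (intro lip_rate_bound) auto

lemma layer_shift_le:
  assumes "l < L"
  shows "lam / sqrt (dims (Suc l)) * (\<kappa> * sqrt n + sqrt n) \<le> lip_shift lam \<kappa> \<alpha>"
  using assms dims_pos[of "Suc l"] \<alpha>_ge[of l] \<kappa>_nonneg lam_nonneg by (intro lip_shift_bound) auto

lemma op_norm_le_Zlayer_Suc:
  "l < L \<Longrightarrow> op_norm_le (dims (Suc l)) n (Zlayer dims \<sigma> p (Suc l)) (\<kappa> * sqrt n)"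
  using op_norm_le_mono[OF op_norm_le_hs_norm hs_norm_Zlayer_Suc_le] \<sigma>_bounded dims_pos by simp

lemma hs_dist_Zlayer_1_le:
  assumes c: "c \<ge> 0" and p: "p \<in> good_params c" and q: "q \<in> good_params c"
  shows "hs_dist (dims 1) n (Zlayer dims \<sigma> p 1) (Zlayer dims \<sigma> q 1)
           \<le> lip_first L \<rho> lam \<kappa> \<alpha> \<beta> \<eta> c * param_dist L n dims p q"
proof -
  let ?d = "param_dist L n dims p q"
  define R where "R = block_bound \<rho> (dims 1) (dims 0) (dev c)"
  define RX where "RX = block_bound \<rho> (dims 0) n (dev c)"
  have R: "R \<ge> 0" "RX \<ge> 0" unfolding R_def RX_def block_bound_def using \<rho>_pos dev_nonneg[OF c] by auto
  have s0: "sqrt (dims 0) > 0" and s1: "sqrt (dims 1) > 0" using dims_pos L_pos by auto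
  have "op_norm_le (dims 0) n (Zlayer dims \<sigma> q 0) (RX / sqrt (dims 0))"
    using q s0 unfolding good_params_def RX_def by (auto intro: op_norm_le_divide)
  then have "hs_dist (dims 1) n (Zlayer dims \<sigma> p 1) (Zlayer dims \<sigma> q 1)
      \<le> lam / sqrt (dims 1) * (R * hs_dist (dims 0) n (Zlayer dims \<sigma> p 0) (Zlayer dims \<sigma> q 0)
           + (RX / sqrt (dims 0) + sqrt n) * ?d)"
    using p R L_pos unfolding good_params_def R_def
    by (intro hs_dist_Zlayer_Suc_le[where l=0, unfolded One_nat_def[symmetric]] \<sigma>_lipschitz lam_nonneg) auto
  also have "\<dots> \<le> lam / sqrt (dims 1) * (R * (?d / sqrt (dims 0)) + (RX / sqrt (dims 0) + sqrt n) * ?d)"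
    using hs_dist_Zlayer_0[of dims n \<sigma> p q] dims_pos[of 0] hs_dist_pX_le_param_dist[of dims n p q L] R lam_nonneg s0
    by (intro mult_left_mono add_right_mono) (auto simp: divide_right_mono)
  also have "\<dots> = (lam / sqrt (dims 1) * R / sqrt (dims 0) + lam * RX / (sqrt (dims 0) * sqrt (dims 1))
                   + lam * (sqrt n / sqrt (dims 1))) * ?d"
    using s0 s1 by (simp add: field_simps)
  also have "\<dots> \<le> lip_first L \<rho> lam \<kappa> \<alpha> \<beta> \<eta> c * ?d"
    unfolding lip_first_def
  proof (intro mult_right_mono add_mono param_dist_nonneg)
    have "lam / sqrt (dims 1) * R / sqrt (dims 0) \<le> lip_rate L \<rho> lam \<kappa> \<alpha> \<beta> c / sqrt (dims 0)"
      using divide_right_mono[OF layer_rate_le[OF L_pos c], of "sqrt (dims 0)"] unfolding R_def by simp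
    also have "\<dots> \<le> lip_rate L \<rho> lam \<kappa> \<alpha> \<beta> c / sqrt (eta1 \<eta>)"
      using lip_constants_nonneg(1)[OF lam_nonneg \<kappa>_nonneg less_imp_le[OF \<alpha>_pos] \<beta>_nonneg \<rho>_pos c]
        eta1_le_dims_0 by (intro divide_left_mono) (auto simp: eta1_def)
    finally show "lam / sqrt (dims 1) * R / sqrt (dims 0) \<le> lip_rate L \<rho> lam \<kappa> \<alpha> \<beta> c / sqrt (eta1 \<eta>)" .
    show "lam * RX / (sqrt (dims 0) * sqrt (dims 1)) \<le> lip_input L \<rho> lam \<kappa> \<alpha> \<eta> c"
      unfolding RX_def
      using eta1_le_dims_0 dims_ge_1[of 1] L_pos n_pos \<alpha>_ge[OF L_pos] dev_nonneg[OF c] dev_squared[OF c]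
        lam_nonneg \<rho>_pos c
      by (intro lip_input_bound) auto
    have "sqrt n / sqrt (dims 1) \<le> sqrt \<alpha>" using \<alpha>_ge[OF L_pos] s1 by (intro sqrt_divide_le) auto
    then show "lam * (sqrt n / sqrt (dims 1)) \<le> lam * sqrt \<alpha>" using lam_nonneg by (rule mult_left_mono)
  qed
  finally show ?thesis .
qed

lemma hs_dist_Zlayer_Suc_Suc_le:
  assumes c: "c \<ge> 0" and j: "Suc j < L" and p: "p \<in> good_params c"
  shows "hs_dist (dims (Suc (Suc j))) n (Zlayer dims \<sigma> p (Suc (Suc j))) (Zlayer dims \<sigma> q (Suc (Suc j)))
           \<le> lip_rate L \<rho> lam \<kappa> \<alpha> \<beta> c * hs_dist (dims (Suc j)) n (Zlayer dims \<sigma> p (Suc j)) (Zlayer dims \<sigma> q (Suc j))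
             + lip_shift lam \<kappa> \<alpha> * param_dist L n dims p q"
proof -
  let ?R = "block_bound \<rho> (dims (Suc (Suc j))) (dims (Suc j)) (dev c)"
  let ?h = "hs_dist (dims (Suc j)) n (Zlayer dims \<sigma> p (Suc j)) (Zlayer dims \<sigma> q (Suc j))"
  have R: "?R \<ge> 0" unfolding block_bound_def using \<rho>_pos dev_nonneg[OF c] by auto
  have "hs_dist (dims (Suc (Suc j))) n (Zlayer dims \<sigma> p (Suc (Suc j))) (Zlayer dims \<sigma> q (Suc (Suc j)))
        \<le> lam / sqrt (dims (Suc (Suc j))) * (?R * ?h + (\<kappa> * sqrt n + sqrt n) * param_dist L n dims p q)"
    using p j R \<kappa>_nonneg unfolding good_params_def
    by (intro hs_dist_Zlayer_Suc_le \<sigma>_lipschitz lam_nonneg op_norm_le_Zlayer_Suc) auto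
  also have "\<dots> = (lam / sqrt (dims (Suc (Suc j))) * ?R) * ?h
                 + (lam / sqrt (dims (Suc (Suc j))) * (\<kappa> * sqrt n + sqrt n)) * param_dist L n dims p q"
    by (simp add: algebra_simps)
  also have "\<dots> \<le> lip_rate L \<rho> lam \<kappa> \<alpha> \<beta> c * ?h + lip_shift lam \<kappa> \<alpha> * param_dist L n dims p q"
    using layer_rate_le[OF j c] layer_shift_le[OF j] hs_dist_nonneg param_dist_nonneg
    by (intro add_mono mult_right_mono) auto
  finally show ?thesis .
qed

lemma hs_dist_Zlayer_le_lip_const:
  assumes c: "c \<ge> 0" and p: "p \<in> good_params c" and q: "q \<in> good_params c"
  shows "hs_dist (dims L) n (Zlayer dims \<sigma> p L) (Zlayer dims \<sigma> q L)
           \<le> lip_const L \<rho> lam \<kappa> \<alpha> \<beta> \<eta> c * param_dist L n dims p q"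
proof -
  let ?r = "lip_rate L \<rho> lam \<kappa> \<alpha> \<beta> c" and ?w = "lip_shift lam \<kappa> \<alpha>" and ?k = "lip_first L \<rho> lam \<kappa> \<alpha> \<beta> \<eta> c"
  note nonneg = lip_constants_nonneg[OF lam_nonneg \<kappa>_nonneg less_imp_le[OF \<alpha>_pos] \<beta>_nonneg \<rho>_pos c]
  have "j < L \<Longrightarrow> hs_dist (dims (Suc j)) n (Zlayer dims \<sigma> p (Suc j)) (Zlayer dims \<sigma> q (Suc j))
                  \<le> affine_iter ?r ?w ?k j * param_dist L n dims p q" for j
  proof (induction j)
    case 0
    then show ?case using hs_dist_Zlayer_1_le[OF c p q] by simp
  next
    case (Suc j)
    then have "hs_dist (dims (Suc (Suc j))) n (Zlayer dims \<sigma> p (Suc (Suc j))) (Zlayer dims \<sigma> q (Suc (Suc j)))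
               \<le> ?r * (affine_iter ?r ?w ?k j * param_dist L n dims p q) + ?w * param_dist L n dims p q"
      using hs_dist_Zlayer_Suc_Suc_le[OF c Suc.prems p, of q] nonneg(1)
      by (smt (verit, best) Suc_lessD mult_left_mono)
    then show ?case by (simp add: algebra_simps)
  qed
  from this[of "L - 1"] have "hs_dist (dims L) n (Zlayer dims \<sigma> p L) (Zlayer dims \<sigma> q L)
                               \<le> affine_iter ?r ?w ?k (L - 1) * param_dist L n dims p q"
    using L_pos by simp
  also have "\<dots> \<le> lip_const L \<rho> lam \<kappa> \<alpha> \<beta> \<eta> c * param_dist L n dims p q"
    unfolding lip_const_def using param_dist_nonneg \<alpha>_pos by (intro mult_right_mono) auto
  finally show ?thesis .
qed

end

lemma ln_2_gt_half: "ln (2::real) > 1/2"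
proof -
  have "exp (1/2::real) * exp (1/2) \<le> 3" using exp_le by (simp flip: exp_add)
  then have "exp (1/2::real) < 2" using mult_mono[of 2 "exp (1/2::real)" 2 "exp (1/2)"] by linarith
  then have "ln (exp (1/2::real)) < ln 2" by (subst ln_less_cancel_iff) auto
  then show ?thesis by simp
qed

text \<open>Assembling the three regimes: for \<open>c t\<^sup>2 \<le> ln 2\<close> the bound exceeds 1, for \<open>t > B\<close> the event is
  empty, and in between \<open>t \<ge> 7 r\<close>, so that the transferred Gaussian tail is at most \<open>exp (- c t\<^sup>2)\<close>.\<close>

lemma tail_bound_from_regimes:
  fixes P c r t B :: real
  assumes c: "c > 0" and r: "r > 0" and cr: "c * r\<^sup>2 \<le> 1/100" and t: "t > 0"
    and P1: "P \<le> 1" and empty: "t > B \<Longrightarrow> P = 0"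
    and tail: "t > 2 * r \<Longrightarrow> P \<le> exp (- c * B\<^sup>2) / 4 + 2 * exp (- (t - 2 * r)\<^sup>2 / r\<^sup>2)"
  shows "P \<le> 2 * exp (- c * t\<^sup>2)"
proof (cases "c * t\<^sup>2 \<le> ln 2")
  case True
  then have "exp (- ln 2) \<le> exp (- c * t\<^sup>2)" by simp
  then show ?thesis using P1 by (simp add: exp_minus)
next
  case False
  then have ct: "c * t\<^sup>2 > ln 2" by simp
  show ?thesis
  proof (cases "t > B")
    case True
    then show ?thesis using empty by simp
  next
    case False
    have "c * (49 * r\<^sup>2) < c * t\<^sup>2" using cr ct ln_2_gt_half by simp
    then have "(7 * r)\<^sup>2 \<le> t\<^sup>2" using c by (simp add: power_mult_distrib)
    then have t7: "7 * r \<le> t" using t r by (meson power2_le_imp_le less_imp_le)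
    have eB: "exp (- c * B\<^sup>2) \<le> exp (- c * t\<^sup>2)"
      using False t c by (simp add: power_mono)
    moreover have "(c * t\<^sup>2 + ln 2) * r\<^sup>2 \<le> (t - 2 * r)\<^sup>2"
    proof -
      have "(c * t\<^sup>2 + ln 2) * r\<^sup>2 \<le> 2 * t\<^sup>2 * (c * r\<^sup>2)" using ct r by (simp add: algebra_simps mult_right_mono)
      also have "\<dots> \<le> 2 * t\<^sup>2 * (1/100)" using cr by (intro mult_left_mono) auto
      also have "\<dots> \<le> 25/49 * t\<^sup>2" by simp
      also have "\<dots> = (5/7 * t)\<^sup>2" by (simp add: power_mult_distrib power_divide)
      also have "\<dots> \<le> (t - 2 * r)\<^sup>2" using t7 r by (intro power_mono) auto
      finally show ?thesis .
    qed
    then have "c * t\<^sup>2 + ln 2 \<le> (t - 2 * r)\<^sup>2 / r\<^sup>2" using r by (simp add: le_divide_eq)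
    then have "exp (- (t - 2 * r)\<^sup>2 / r\<^sup>2) \<le> exp (- (c * t\<^sup>2 + ln 2))" by simp
    moreover have "exp (- (c * t\<^sup>2 + ln 2)) = exp (- c * t\<^sup>2) / 2" by (simp add: exp_diff exp_minus field_simps)
    ultimately have "2 * exp (- (t - 2 * r)\<^sup>2 / r\<^sup>2) \<le> exp (- c * t\<^sup>2)" by linarith
    moreover have "P \<le> exp (- c * B\<^sup>2) / 4 + 2 * exp (- (t - 2 * r)\<^sup>2 / r\<^sup>2)"
      using tail t7 r by simp
    ultimately show ?thesis using eB exp_gt_zero[of "- c * t\<^sup>2"] by linarith
  qed
qed

context A1_model
begin

lemma abs_F_Zlayer_minus_median_le:
  assumes F: "\<And>A B. \<bar>F A - F B\<bar> \<le> hs_dist (dims L) n A B" and med: "is_median M (\<lambda>p. F (Zlayer dims \<sigma> p L)) m"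
  shows "\<bar>F (Zlayer dims \<sigma> p L) - m\<bar> \<le> 2 * \<kappa> * sqrt n"
proof -
  define Y where "Y p = F (Zlayer dims \<sigma> p L)" for p
  have hs: "hs_norm (dims L) n (Zlayer dims \<sigma> p L) \<le> \<kappa> * sqrt n" for p
    using hs_norm_Zlayer_Suc_le[of \<sigma> "L - 1" \<kappa> dims n p] \<sigma>_bounded dims_pos L_pos by simp
  have Y_diff: "\<bar>Y p - Y q\<bar> \<le> 2 * \<kappa> * sqrt n" for p q
  proof -
    have "\<bar>Y p - Y q\<bar> \<le> hs_norm (dims L) n (\<lambda>i j. Zlayer dims \<sigma> p L i j + (- Zlayer dims \<sigma> q L i j))"
      unfolding Y_def using F by (simp flip: hs_norm_diff)
    also have "\<dots> \<le> hs_norm (dims L) n (Zlayer dims \<sigma> p L) + hs_norm (dims L) n (\<lambda>i j. - Zlayer dims \<sigma> q L i j)"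
      by (rule hs_norm_triangle)
    also have "hs_norm (dims L) n (\<lambda>i j. - Zlayer dims \<sigma> q L i j) = hs_norm (dims L) n (Zlayer dims \<sigma> q L)"
      unfolding hs_norm_def by simp
    finally show ?thesis using hs[of p] hs[of q] by simp
  qed
  have "{p\<in>space M. Y p \<ge> m} \<noteq> {}" "{p\<in>space M. Y p \<le> m} \<noteq> {}"
    using med unfolding is_median_def Y_def by (auto simp del: Collect_empty_eq)
  then obtain p1 p2 where "Y p1 \<ge> m" "Y p2 \<le> m" by blast
  then show ?thesis using Y_diff[of p p2] Y_diff[of p1 p] unfolding Y_def by (simp add: abs_le_iff)
qed

lemma concentration_F_Zlayer:
  assumes c: "c > 0" and cK: "c * (lip_const L \<rho> lam \<kappa> \<alpha> \<beta> \<eta> c * \<rho>)\<^sup>2 \<le> 1/100"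
    and F: "\<And>A B. \<bar>F A - F B\<bar> \<le> hs_dist (dims L) n A B"
    and t: "t > 0" and med: "is_median M (\<lambda>p. F (Zlayer dims \<sigma> p L)) m"
  shows "measure M {p\<in>space M. \<bar>F (Zlayer dims \<sigma> p L) - m\<bar> \<ge> t} \<le> 2 * exp (- c * t\<^sup>2)"
proof -
  define K where "K = lip_const L \<rho> lam \<kappa> \<alpha> \<beta> \<eta> c"
  have K: "K > 0" unfolding K_def using lam_nonneg \<kappa>_nonneg \<alpha>_pos \<beta>_nonneg \<rho>_pos c by (simp add: lip_const_pos)
  obtain G where G: "G \<in> sets M" "G \<subseteq> good_params c" "measure M (space M - G) \<le> exp (- (4 * c * \<kappa>\<^sup>2 * n)) / 4"
    using good_event_exists[OF less_imp_le[OF c]] by blast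
  have lip: "\<bar>F (Zlayer dims \<sigma> p L) - F (Zlayer dims \<sigma> q L)\<bar> \<le> K * param_dist L n dims p q"
    if "p \<in> G" "q \<in> G" for p q
    using F[of "Zlayer dims \<sigma> p L" "Zlayer dims \<sigma> q L"] hs_dist_Zlayer_le_lip_const[of c p q] that G(2) c
    unfolding K_def by fastforce
  show ?thesis
  proof (rule tail_bound_from_regimes[OF c _ _ t prob_le_1])
    show "K * \<rho> > 0" using K \<rho>_pos by simp
    show "c * (K * \<rho>)\<^sup>2 \<le> 1/100" using cK unfolding K_def .
    show "measure M {p\<in>space M. \<bar>F (Zlayer dims \<sigma> p L) - m\<bar> \<ge> t} = 0" if "t > 2 * \<kappa> * sqrt n"
    proof -
      have "\<not> \<bar>F (Zlayer dims \<sigma> p L) - m\<bar> \<ge> t" for p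
        using abs_F_Zlayer_minus_median_le[OF F med, of p] that by linarith
      then have "{p\<in>space M. \<bar>F (Zlayer dims \<sigma> p L) - m\<bar> \<ge> t} = {}" by blast
      then show ?thesis by (metis measure_empty)
    qed
    show "measure M {p\<in>space M. \<bar>F (Zlayer dims \<sigma> p L) - m\<bar> \<ge> t}
        \<le> exp (- c * (2 * \<kappa> * sqrt n)\<^sup>2) / 4 + 2 * exp (- (t - 2 * (K * \<rho>))\<^sup>2 / (K * \<rho>)\<^sup>2)"
      if "t > 2 * (K * \<rho>)"
      using concentration_of_lipschitz_on[OF G(1) G(3) _ K lip med] that c
      by (simp add: power_mult_distrib mult_ac)
  qed
qed

end

lemma valid_const_if_small:
  assumes \<rho>: "\<rho> > 0" and c: "c > 0" and cK: "c * (lip_const L \<rho> lam \<kappa> \<alpha> \<beta> \<eta> c * \<rho>)\<^sup>2 \<le> 1/100"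
  shows "valid_const L \<rho> lam \<kappa> \<alpha> \<beta> \<eta> c"
  unfolding valid_const_def
proof (intro allI impI)
  fix n dims \<sigma> M F and t m :: real
  assume "A1 L n dims \<sigma> M \<rho> lam \<kappa> \<alpha> \<beta> \<eta>" "\<forall>A B. \<bar>F A - F B\<bar> \<le> hs_dist (dims L) n A B"
    "t > 0" "is_median M (\<lambda>p. F (Zlayer dims \<sigma> p L)) m"
  then show "measure M {p \<in> space M. t \<le> \<bar>F (Zlayer dims \<sigma> p L) - m\<bar>} \<le> 2 * exp (- c * t\<^sup>2)"
    using A1_model.concentration_F_Zlayer[OF A1_model.intro c cK] \<rho> by blast
qed

section \<open>Limits of the constants\<close>

lemma affine_iter_tendsto:
  assumes "(r \<longlongrightarrow> r0) F" "(w \<longlongrightarrow> w0) F" "(k \<longlongrightarrow> k0) F"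
  shows "((\<lambda>x. affine_iter (r x) (w x) (k x) j) \<longlongrightarrow> affine_iter r0 w0 k0 j) F"
  by (induction j) (simp_all add: assms tendsto_add tendsto_mult)

lemma affine_iter_0_0: "affine_iter r 0 0 j = 0"
  by (induction j) auto

lemma lip_const_tendsto_at_right_0:
  "((\<lambda>c. lip_const L \<rho> lam \<kappa> \<alpha> \<beta> \<eta> c) \<longlongrightarrow> lip_const L \<rho> lam \<kappa> \<alpha> \<beta> \<eta> 0) (at_right 0)"
proof -
  have c: "((\<lambda>c::real. c) \<longlongrightarrow> 0) (at_right 0)" by (rule tendsto_ident_at)
  have rate: "((\<lambda>c. lip_rate L \<rho> lam \<kappa> \<alpha> \<beta> c) \<longlongrightarrow> lip_rate L \<rho> lam \<kappa> \<alpha> \<beta> 0) (at_right 0)"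
    unfolding lip_rate_def by (intro tendsto_intros c)
  have "((\<lambda>c. lip_input L \<rho> lam \<kappa> \<alpha> \<eta> c) \<longlongrightarrow> lip_input L \<rho> lam \<kappa> \<alpha> \<eta> 0) (at_right 0)"
    unfolding lip_input_def by (intro tendsto_intros c) (auto simp: eta1_def)
  then have "((\<lambda>c. lip_first L \<rho> lam \<kappa> \<alpha> \<beta> \<eta> c) \<longlongrightarrow> lip_first L \<rho> lam \<kappa> \<alpha> \<beta> \<eta> 0) (at_right 0)"
    unfolding lip_first_def by (intro tendsto_intros rate) (auto simp: eta1_def)
  then show ?thesis unfolding lip_const_def by (intro tendsto_intros affine_iter_tendsto rate)
qed

lemma exists_valid_const:
  assumes "\<rho> > 0"
  shows "\<exists>c>0. valid_const L \<rho> lam \<kappa> \<alpha> \<beta> \<eta> c"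
proof -
  have "((\<lambda>c. c * (lip_const L \<rho> lam \<kappa> \<alpha> \<beta> \<eta> c * \<rho>)\<^sup>2) \<longlongrightarrow> 0 * (lip_const L \<rho> lam \<kappa> \<alpha> \<beta> \<eta> 0 * \<rho>)\<^sup>2) (at_right 0)"
    by (intro tendsto_intros lip_const_tendsto_at_right_0)
  then have "eventually (\<lambda>c. c * (lip_const L \<rho> lam \<kappa> \<alpha> \<beta> \<eta> c * \<rho>)\<^sup>2 < 1/100) (at_right 0)"
    by (intro order_tendstoD(2)) auto
  then have "eventually (\<lambda>c. c > 0 \<and> c * (lip_const L \<rho> lam \<kappa> \<alpha> \<beta> \<eta> c * \<rho>)\<^sup>2 < 1/100) (at_right 0)"
    using eventually_at_right_less by (rule eventually_conj[rotated])
  then obtain c where "c > 0" "c * (lip_const L \<rho> lam \<kappa> \<alpha> \<beta> \<eta> c * \<rho>)\<^sup>2 < 1/100"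
    using eventually_happens[of _ "at_right (0::real)"] by (auto simp: trivial_limit_at_right_real)
  then show ?thesis using valid_const_if_small[OF assms] by (intro exI[of _ c]) auto
qed

text \<open>For fixed \<open>c\<close>, every constant of the recursion except \<open>lip_rate\<close> tends to 0 as \<open>\<alpha> \<rightarrow> 0\<close> and
  \<open>\<eta> \<rightarrow> \<infinity>\<close>, hence so does \<open>lip_const\<close>.\<close>

lemma lip_const_tendsto_0:
  "((\<lambda>x. lip_const L \<rho> lam \<kappa> (fst x) \<beta> (snd x) c) \<longlongrightarrow> 0) (at_right (0::real) \<times>\<^sub>F at_top)"
proof -
  let ?F = "at_right (0::real) \<times>\<^sub>F (at_top :: real filter)"
  have \<alpha>: "((\<lambda>x. fst x) \<longlongrightarrow> 0) ?F"
    by (rule filterlim_mono[OF filterlim_fst at_within_le_nhds order_refl])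
  have "filterlim (\<lambda>x. eta1 (snd x)) at_top ?F"
    by (rule filterlim_at_top_mono[OF filterlim_snd]) (auto simp: eta1_def)
  then have \<eta>: "((\<lambda>x. inverse (eta1 (snd x))) \<longlongrightarrow> 0) ?F" by (rule tendsto_inverse_0_at_top)
  have sa: "((\<lambda>x. sqrt (fst x)) \<longlongrightarrow> 0) ?F" using tendsto_real_sqrt[OF \<alpha>] by simp
  have s\<eta>: "((\<lambda>x. sqrt (fst x * inverse (eta1 (snd x)))) \<longlongrightarrow> 0) ?F"
    using tendsto_real_sqrt[OF tendsto_mult[OF \<alpha> \<eta>]] by simp
  have s\<kappa>: "((\<lambda>x. sqrt ((log_blocks L + 4 * c * \<kappa>\<^sup>2) * (fst x * inverse (eta1 (snd x))))) \<longlongrightarrow> 0) ?F"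
    using tendsto_real_sqrt[OF tendsto_mult_left[OF tendsto_mult[OF \<alpha> \<eta>]]] by simp
  have rate: "((\<lambda>x. lip_rate L \<rho> lam \<kappa> (fst x) \<beta> c) \<longlongrightarrow> lip_rate L \<rho> lam \<kappa> 0 \<beta> c) ?F"
    unfolding lip_rate_def by (intro tendsto_intros \<alpha>)
  have "lip_input L \<rho> lam \<kappa> (fst x) (snd x) c = lam * \<rho> * (42 * sqrt (fst x * inverse (eta1 (snd x)))
          + 18 * sqrt (fst x) + 6 * sqrt ((log_blocks L + 4 * c * \<kappa>\<^sup>2) * (fst x * inverse (eta1 (snd x)))))" for x
    unfolding lip_input_def by (simp add: divide_inverse mult.assoc)
  moreover have "((\<lambda>x. lam * \<rho> * (42 * sqrt (fst x * inverse (eta1 (snd x))) + 18 * sqrt (fst x)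
          + 6 * sqrt ((log_blocks L + 4 * c * \<kappa>\<^sup>2) * (fst x * inverse (eta1 (snd x)))))) \<longlongrightarrow>
          lam * \<rho> * (42 * 0 + 18 * 0 + 6 * 0)) ?F"
    by (intro tendsto_intros s\<eta> sa s\<kappa>)
  ultimately have input: "((\<lambda>x. lip_input L \<rho> lam \<kappa> (fst x) (snd x) c) \<longlongrightarrow> 0) ?F" by simp
  have "lip_first L \<rho> lam \<kappa> (fst x) \<beta> (snd x) c = lip_rate L \<rho> lam \<kappa> (fst x) \<beta> c * sqrt (inverse (eta1 (snd x)))
          + lip_input L \<rho> lam \<kappa> (fst x) (snd x) c + lam * sqrt (fst x)" for x
    unfolding lip_first_def by (simp add: divide_inverse real_sqrt_inverse)
  moreover have "((\<lambda>x. lip_rate L \<rho> lam \<kappa> (fst x) \<beta> c * sqrt (inverse (eta1 (snd x)))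
          + lip_input L \<rho> lam \<kappa> (fst x) (snd x) c + lam * sqrt (fst x))
        \<longlongrightarrow> lip_rate L \<rho> lam \<kappa> 0 \<beta> c * 0 + 0 + lam * 0) ?F"
    using tendsto_real_sqrt[OF \<eta>] by (intro tendsto_intros rate input sa) auto
  ultimately have first: "((\<lambda>x. lip_first L \<rho> lam \<kappa> (fst x) \<beta> (snd x) c) \<longlongrightarrow> 0) ?F" by simp
  have shift: "((\<lambda>x. lip_shift lam \<kappa> (fst x)) \<longlongrightarrow> 0) ?F"
    unfolding lip_shift_def using tendsto_mult_left[OF sa, of "lam * (\<kappa> + 1)"] by simp
  have "((\<lambda>x. lip_const L \<rho> lam \<kappa> (fst x) \<beta> (snd x) c)
          \<longlongrightarrow> affine_iter (lip_rate L \<rho> lam \<kappa> 0 \<beta> c) 0 0 (L - 1) + sqrt 0) ?F"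
    unfolding lip_const_def by (intro tendsto_intros affine_iter_tendsto rate shift first \<alpha>)
  then show ?thesis by (simp add: affine_iter_0_0)
qed

lemma c_opt_tendsto_infinity:
  assumes \<rho>: "\<rho> > 0"
  shows "((\<lambda>(\<alpha>, \<eta>). c_opt L \<rho> lam \<kappa> \<alpha> \<beta> \<eta>) \<longlongrightarrow> \<infinity>) (at_right 0 \<times>\<^sub>F at_top)"
  unfolding tendsto_PInfty
proof
  fix B :: real
  define c where "c = max B 0 + 1"
  have c: "c > 0" "B < c" unfolding c_def by auto
  let ?F = "at_right (0::real) \<times>\<^sub>F (at_top :: real filter)"
  have "((\<lambda>x. c * (lip_const L \<rho> lam \<kappa> (fst x) \<beta> (snd x) c * \<rho>)\<^sup>2) \<longlongrightarrow> c * (0 * \<rho>)\<^sup>2) ?F"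
    by (intro tendsto_intros lip_const_tendsto_0)
  then have "eventually (\<lambda>x. c * (lip_const L \<rho> lam \<kappa> (fst x) \<beta> (snd x) c * \<rho>)\<^sup>2 < 1/100) ?F"
    by (intro order_tendstoD(2)) auto
  then show "eventually (\<lambda>x. ereal B < (case x of (\<alpha>, \<eta>) \<Rightarrow> c_opt L \<rho> lam \<kappa> \<alpha> \<beta> \<eta>)) (at_right 0 \<times>\<^sub>F at_top)"
  proof (rule eventually_mono)
    fix x :: "real \<times> real"
    assume "c * (lip_const L \<rho> lam \<kappa> (fst x) \<beta> (snd x) c * \<rho>)\<^sup>2 < 1/100"
    then have "valid_const L \<rho> lam \<kappa> (fst x) \<beta> (snd x) c" using \<rho> c by (intro valid_const_if_small) auto
    then have "ereal c \<le> c_opt L \<rho> lam \<kappa> (fst x) \<beta> (snd x)"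
      unfolding c_opt_def using c by (intro Sup_upper) auto
    then have "ereal B < c_opt L \<rho> lam \<kappa> (fst x) \<beta> (snd x)"
      using less_le_trans[of "ereal B" "ereal c"] c(2) by simp
    then show "ereal B < (case x of (\<alpha>, \<eta>) \<Rightarrow> c_opt L \<rho> lam \<kappa> \<alpha> \<beta> \<eta>)"
      by (simp add: case_prod_beta)
  qed
qed

theorem theorem3p1:
  shows "(\<forall>L \<rho> lam \<kappa> \<alpha> \<beta> \<eta>. \<rho> > 0 \<longrightarrow> (\<exists>c>0. valid_const L \<rho> lam \<kappa> \<alpha> \<beta> \<eta> c))
       \<and> (\<forall>L \<rho> lam \<kappa> \<beta>. \<rho> > 0 \<longrightarrow>
            ((\<lambda>(\<alpha>, \<eta>). c_opt L \<rho> lam \<kappa> \<alpha> \<beta> \<eta>) \<longlongrightarrow> \<infinity>) (at_right 0 \<times>\<^sub>F at_top))"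
  using exists_valid_const c_opt_tendsto_infinity by blast

end
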